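(* Let $V$ be an $n$-dimensional real vector space, $\Gamma\subset V$ a lattice of rank $n$, $\Lambda\subset V^*$ the dual lattice, and $\mathcal{A}$ a finite set of hyperplanes through $0$ in $V$, each the zero set of some element of $\Lambda$, with $\bigcap\mathcal{A}=\{0\}$. Let $\Delta$ be a chamber of $V^*\setminus(\Lambda+\bigcup\check{\mathcal{A}})$. Let $C=(H_1,\dots,H_{n+1})$ be an ordered circuit of $\mathcal{A}$ with $n+1$ elements, and let $C[i]$ be the ordered $n$-tuple obtained by omitting $H_i$. Then $$\sum_{i=1}^{n+1}(-1)^i\mu_\Delta(C[i])=0$$ as meromorphic $n$-forms on $V_{\mathbb{C}}$.
   Context: A circuit is a minimally dependent subset of $\mathcal{A}$ (dependence meaning linear dependence of defining forms): it is dependent but removing any element makes it independent; so each $C[i]$ is an ordered linearly independent $n$-tuple. $V_{\mathbb{C}}$ is the complexification of $V$; elements $y\in V^*$ are complex linear functions on $V_{\mathbb{C}}$ and $\exp(y)$ denotes $v\mapsto e^{\langle y,v\rangle}$; $\mathrm{td}(x)=dx/(1-\exp(x))$. $\check{\mathcal{A}}$ is the arrangement in $V^*$ of the hyperplanes $L^\perp$, for $L\subset V$ ranging over one-dimensional subspaces that are intersections of hyperplanes of $\mathcal{A}$; a chamber is a connected component of $V^*$ minus the union of all $\Lambda$-translates of these hyperplanes. For an ordered linearly independent $n$-tuple $S=(H_1,\dots,H_n)$ of elements of $\mathcal{A}$, choose $x_i\in\Lambda$ defining $H_i$, put $\vec x=(x_1,\dots,x_n)$, $\mathrm{cube}(\vec{x})=\{\sum\lambda_ix_i:0\le\lambda_i<1\}$,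 $\mathrm{vol}(\vec x)=[\Lambda:\mathbb{Z}x_1+\dots+\mathbb{Z}x_n]$, choose $t\in\Delta$, and set $\mu_\Delta(S)=\frac{1}{\mathrm{vol}(\vec{x})}\mathrm{td}(x_1)\wedge\dots\wedge\mathrm{td}(x_n)\sum_{y\in\Lambda\cap(\mathrm{cube}(\vec{x})-t)}\exp(y)$; this form does not depend on the choices of the $x_i$ and of $t\in\Delta$. *)

theory Defs
  imports "HOL-Analysis.Analysis"
begin

text \<open>V is modelled as real^'n, and V^* is identified with real^'n via the
  inner product: y in V^* acts by v |-> y \<bullet> v.  V_C is complex^'n.\<close>

definition full_lattice :: "(real^'n) set \<Rightarrow> bool" where
  "full_lattice \<Gamma> \<longleftrightarrow> (\<exists>b :: 'n \<Rightarrow> real^'n. inj b \<and> independent (range b) \<and>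
      \<Gamma> = {\<Sum>i\<in>UNIV. of_int (k i) *\<^sub>R b i | k. True})"

definition dual_lattice :: "(real^'n) set \<Rightarrow> (real^'n) set" where
  "dual_lattice \<Gamma> = {y. \<forall>g\<in>\<Gamma>. y \<bullet> g \<in> \<int>}"

definition defines_hyp :: "real^'n \<Rightarrow> (real^'n) set \<Rightarrow> bool" where
  "defines_hyp x H \<longleftrightarrow> x \<noteq> 0 \<and> H = {v. x \<bullet> v = 0}"

definition hyp_indep :: "(real^'n) set set \<Rightarrow> bool" where
  "hyp_indep S \<longleftrightarrow> (\<exists>f. (\<forall>H\<in>S. defines_hyp (f H) H) \<and> inj_on f S \<and> independent (f ` S))"

definition is_circuit :: "(real^'n) set set \<Rightarrow> (real^'n) set set \<Rightarrow> bool" where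
  "is_circuit \<A> S \<longleftrightarrow> S \<subseteq> \<A> \<and> \<not> hyp_indep S \<and> (\<forall>H\<in>S. hyp_indep (S - {H}))"

text \<open>Union of the hyperplanes L^perp of the dual arrangement, L ranging over
  one-dimensional subspaces that are intersections of hyperplanes of A
  (the empty intersection, V itself, included).\<close>
definition dual_arr_union :: "(real^'n) set set \<Rightarrow> (real^'n) set" where
  "dual_arr_union \<A> = \<Union>{ {y. \<forall>v\<in>L. y \<bullet> v = 0} | L. \<exists>S\<subseteq>\<A>. L = \<Inter>S \<and> dim L = 1}"

definition chamber_set :: "(real^'n) set \<Rightarrow> (real^'n) set set \<Rightarrow> (real^'n) set" where
  "chamber_set \<Lambda> \<A> = UNIV - (\<Union>l\<in>\<Lambda>. (\<lambda>y. l + y) ` dual_arr_union \<A>)"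

definition cube :: "(real^'n) list \<Rightarrow> (real^'n) set" where
  "cube xs = {\<Sum>j<length xs. l j *\<^sub>R xs ! j | l. \<forall>j<length xs. 0 \<le> l j \<and> l j < 1}"

definition int_span :: "(real^'n) list \<Rightarrow> (real^'n) set" where
  "int_span xs = {\<Sum>j<length xs. of_int (k j) *\<^sub>R xs ! j | k. True}"

text \<open>vol(x) = index [Lambda : Z x_1 + ... + Z x_n] = number of cosets.\<close>
definition lattice_index :: "(real^'n) set \<Rightarrow> (real^'n) list \<Rightarrow> nat" where
  "lattice_index \<Lambda> xs = card ((\<lambda>y. (\<lambda>w. y + w) ` int_span xs) ` \<Lambda>)"

text \<open>A fixed enumeration of the coordinate index type, used to identify
  n-forms on V_C with functions (coefficient of a fixed volume form).\<close>
definition idx :: "'n::finite \<Rightarrow> nat" where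
  "idx = (SOME f. bij_betw f (UNIV :: 'n set) {..<CARD('n)})"

definition list_det :: "(real^'n::finite) list \<Rightarrow> real" where
  "list_det xs = det (\<chi> r. xs ! idx r)"

definition cpair :: "real^'n \<Rightarrow> complex^'n \<Rightarrow> complex" where
  "cpair y z = (\<Sum>k\<in>UNIV. complex_of_real (y $ k) * z $ k)"

text \<open>Coefficient function of mu_Delta(S) with respect to the volume form
  dz_(idx^-1 0) \<and> ... \<and> dz_(idx^-1 (n-1)), for chosen defining vectors xs
  and t in Delta: dx_1\<and>...\<and>dx_n = det(x_1..x_n) dz, and
  td(x) = dx/(1 - exp x).\<close>
definition mu_coef :: "(real^'n::finite) set \<Rightarrow> (real^'n) list \<Rightarrow> real^'n \<Rightarrow> complex^'n \<Rightarrow> complex" where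
  "mu_coef \<Lambda> xs t z =
     (1 / of_nat (lattice_index \<Lambda> xs)) * complex_of_real (list_det xs) *
     (\<Prod>j<length xs. 1 / (1 - exp (cpair (xs ! j) z))) *
     (\<Sum>y\<in>{y\<in>\<Lambda>. y + t \<in> cube xs}. exp (cpair y z))"

end

theory Submission
  imports Defs
begin

(*
  Fix a defining form x_k in the dual lattice for each hyperplane of the circuit, so that
  C[m+1] is cut out by the x_k with k <> m and sum_k a_k x_k = 0 with every a_k nonzero.
  The coefficient of mu_Delta(S) does not change when a form is replaced by a nonzero lattice
  multiple (scaling by m multiplies the index and the determinant by m and the lattice sum by
  1 + e + ... + e^(m-1); a change of sign is absorbed because the points of a chamber are
  generic), nor when t moves inside Delta.  By Cramer's rule (-1)^m det C[m+1] is proportional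
  to a_m, so (-1)^m mu_Delta(C[m+1]) is a common factor times a_m / vol(C[m+1]) times
  sum_{y in P_m} e^y - sum_{y in P_m} e^(y + x_m), where P_m is the set of lattice points y with
  y + t in the cell spanned by C[m+1].  The combination sum_m sgn(a_m) (1_{P_m} - 1_{P_m + x_m})
  vanishes pointwise: the representations y + t = sum_k (c_k + s a_k) x_k of a lattice point
  form a line, which meets the unit box in a segment whose two ends are each reached by exactly
  one m, with opposite signs.  Summing y instead of e^y shows that vol(C[m+1]) is proportional
  to |a_m|, so a_m / vol(C[m+1]) is a constant times sgn(a_m).
*)

section \<open>Coordinates with respect to a basis\<close>

definition basis_list :: "(real^'n) list \<Rightarrow> bool" where
  "basis_list S \<longleftrightarrow> length S = CARD('n) \<and> distinct S \<and> independent (set S)"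

definition coord :: "(real^'n) list \<Rightarrow> real^'n \<Rightarrow> nat \<Rightarrow> real" where
  "coord S v j = representation (set S) v (S!j)"

lemma sum_lessThan_nth_distinct:
  assumes "distinct S"
  shows "(\<Sum>j<length S. g (S!j)) = (\<Sum>v\<in>set S. g v)"
proof -
  have "inj_on (nth S) {..<length S}"
    using assms by (simp add: inj_on_def nth_eq_iff_index_eq)
  moreover have "nth S ` {..<length S} = set S"
    by (auto simp: set_conv_nth)
  ultimately show ?thesis
    using sum.reindex[of "nth S" "{..<length S}" g] by simp
qed

lemma basis_list_length: "basis_list (S :: (real^'n) list) \<Longrightarrow> length S = CARD('n)"
  by (simp add: basis_list_def)

lemma basis_list_span:
  assumes "basis_list (S :: (real^'n) list)"
  shows "span (set S) = UNIV"
proof -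
  have "dim (UNIV :: (real^'n) set) \<le> card (set S)"
    using assms by (simp add: basis_list_def distinct_card)
  then show ?thesis
    using card_ge_dim_independent[of "set S" UNIV] assms by (auto simp: basis_list_def)
qed

lemma coord_sum:
  assumes "basis_list (S :: (real^'n) list)"
  shows "(\<Sum>j<CARD('n). coord S v j *\<^sub>R S!j) = v"
proof -
  have "(\<Sum>j<CARD('n). coord S v j *\<^sub>R S!j) = (\<Sum>b\<in>set S. representation (set S) v b *\<^sub>R b)"
    using sum_lessThan_nth_distinct[of S "\<lambda>b. representation (set S) v b *\<^sub>R b"] assms
    by (simp add: basis_list_def coord_def)
  also have "\<dots> = v"
    using assms basis_list_span by (intro sum_representation_eq) (auto simp: basis_list_def)
  finally show ?thesis .
qed

lemma basis_list_lincomb_eq_0: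
  assumes S: "basis_list (S :: (real^'n) list)"
    and zero: "(\<Sum>j<CARD('n). l j *\<^sub>R S!j) = 0" and j: "j < CARD('n)"
  shows "l j = 0"
proof -
  have d: "distinct S" and len: "length S = CARD('n)" and ind: "independent (set S)"
    using S by (auto simp: basis_list_def)
  have inj: "inj_on (nth S) {..<CARD('n)}"
    using d len by (simp add: inj_on_def nth_eq_iff_index_eq)
  define c where "c v = l (the_inv_into {..<CARD('n)} (nth S) v)" for v
  have cS: "c (S!k) = l k" if "k < CARD('n)" for k
    unfolding c_def using the_inv_into_f_f[OF inj] that by simp
  have "(\<Sum>v\<in>set S. c v *\<^sub>R v) = (\<Sum>k<CARD('n). l k *\<^sub>R S!k)"
    using sum_lessThan_nth_distinct[OF d, of "\<lambda>v. c v *\<^sub>R v"] len cS by simp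
  then have "\<forall>v\<in>set S. c v = 0"
    using zero ind independent_explicit by (metis List.finite_set)
  then show ?thesis
    using cS[OF j] j len by simp
qed

lemma coord_unique:
  assumes S: "basis_list (S :: (real^'n) list)"
    and v: "(\<Sum>j<CARD('n). l j *\<^sub>R S!j) = v" and j: "j < CARD('n)"
  shows "coord S v j = l j"
proof -
  have "(\<Sum>j<CARD('n). (coord S v j - l j) *\<^sub>R S!j) = 0"
    using coord_sum[OF S, of v] v by (simp add: scaleR_diff_left sum_subtractf)
  from basis_list_lincomb_eq_0[OF S this j] show ?thesis by simp
qed

lemma coord_eq_0_iff:
  assumes "basis_list (S :: (real^'n) list)"
  shows "(\<forall>j<CARD('n). coord S v j = 0) \<longleftrightarrow> v = 0"
  using coord_sum[OF assms, of v] coord_unique[OF assms, of "\<lambda>_. 0" 0] by auto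

lemma coord_add:
  assumes S: "basis_list (S :: (real^'n) list)" and j: "j < CARD('n)"
  shows "coord S (u + v) j = coord S u j + coord S v j"
  by (rule coord_unique[OF S _ j])
    (simp add: scaleR_add_left sum.distrib coord_sum[OF S])

lemma coord_scaleR:
  assumes S: "basis_list (S :: (real^'n) list)" and j: "j < CARD('n)"
  shows "coord S (r *\<^sub>R u) j = r * coord S u j"
proof (rule coord_unique[OF S _ j])
  have "(\<Sum>j<CARD('n). (r * coord S u j) *\<^sub>R S!j) = r *\<^sub>R (\<Sum>j<CARD('n). coord S u j *\<^sub>R S!j)"
    by (simp add: scaleR_sum_right)
  then show "(\<Sum>j<CARD('n). (r * coord S u j) *\<^sub>R S!j) = r *\<^sub>R u"
    by (simp add: coord_sum[OF S])
qed

lemma coord_zero: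
  assumes S: "basis_list (S :: (real^'n) list)" and j: "j < CARD('n)"
  shows "coord S 0 j = 0"
  using coord_scaleR[OF S j, of 0 0] by simp

lemma coord_diff:
  assumes S: "basis_list (S :: (real^'n) list)" and j: "j < CARD('n)"
  shows "coord S (u - v) j = coord S u j - coord S v j"
  using coord_add[OF S j, of u "(-1) *\<^sub>R v"] coord_scaleR[OF S j, of "-1" v] by simp

lemma coord_nth:
  assumes S: "basis_list (S :: (real^'n) list)" and j: "j < CARD('n)" and k: "k < CARD('n)"
  shows "coord S (S!k) j = (if j = k then 1 else 0)"
proof (rule coord_unique[OF S _ j])
  have "(\<Sum>j<CARD('n). (if j = k then 1 else 0) *\<^sub>R S!j) = (\<Sum>j<CARD('n). if j = k then S!j else 0)"
    by (rule sum.cong) auto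
  then show "(\<Sum>j<CARD('n). (if j = k then 1 else 0) *\<^sub>R S!j) = S!k"
    using k by simp
qed

lemma coord_add_scaleR_nth:
  assumes S: "basis_list (S :: (real^'n) list)" and j: "j < CARD('n)" and k: "k < CARD('n)"
  shows "coord S (v + r *\<^sub>R S!j) k = coord S v k + (if k = j then r else 0)"
  using coord_add[OF S k] coord_scaleR[OF S k] coord_nth[OF S k j] by simp

lemma basis_list_nth_nonzero:
  assumes S: "basis_list (S :: (real^'n) list)" and j: "j < CARD('n)"
  shows "S!j \<noteq> 0"
proof
  assume "S!j = 0"
  then show False
    using coord_nth[OF S j j] coord_zero[OF S j] by simp
qed

lemma continuous_on_coord:
  assumes S: "basis_list (S :: (real^'n) list)" and j: "j < CARD('n)"
  shows "continuous_on A (\<lambda>v. coord S v j)"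
proof -
  have "linear (\<lambda>v. coord S v j)"
    by (rule linearI) (simp_all add: coord_add[OF S j] coord_scaleR[OF S j])
  then show ?thesis
    by (intro linear_continuous_on linear_conv_bounded_linear[THEN iffD1])
qed

lemma cube_iff_coord:
  assumes S: "basis_list (S :: (real^'n) list)"
  shows "v \<in> cube S \<longleftrightarrow> (\<forall>j<CARD('n). 0 \<le> coord S v j \<and> coord S v j < 1)"
proof
  assume "v \<in> cube S"
  then obtain l where l: "\<forall>j<CARD('n). 0 \<le> l j \<and> l j < 1" "(\<Sum>j<CARD('n). l j *\<^sub>R S!j) = v"
    using S by (auto simp: cube_def basis_list_def)
  then show "\<forall>j<CARD('n). 0 \<le> coord S v j \<and> coord S v j < 1"
    using coord_unique[OF S l(2)] by auto
next
  assume "\<forall>j<CARD('n). 0 \<le> coord S v j \<and> coord S v j < 1"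
  then show "v \<in> cube S"
    using coord_sum[OF S, of v] basis_list_length[OF S] unfolding cube_def
    by (intro CollectI exI[of _ "coord S v"]) simp
qed

section \<open>The dual lattice and its points in a shifted cube\<close>

lemma dual_lattice_zero: "0 \<in> dual_lattice G"
  by (simp add: dual_lattice_def)

lemma dual_lattice_add: "a \<in> dual_lattice G \<Longrightarrow> b \<in> dual_lattice G \<Longrightarrow> a + b \<in> dual_lattice G"
  by (auto simp: dual_lattice_def inner_add_left)

lemma dual_lattice_scaleR_of_int: "a \<in> dual_lattice G \<Longrightarrow> of_int k *\<^sub>R a \<in> dual_lattice G"
  by (auto simp: dual_lattice_def)

lemma dual_lattice_scaleR_of_nat: "a \<in> dual_lattice G \<Longrightarrow> of_nat k *\<^sub>R a \<in> dual_lattice G"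
  using dual_lattice_scaleR_of_int[of a G "int k"] by simp

lemma dual_lattice_uminus: "a \<in> dual_lattice G \<Longrightarrow> - a \<in> dual_lattice G"
  by (auto simp: dual_lattice_def)

lemma dual_lattice_diff: "a \<in> dual_lattice G \<Longrightarrow> b \<in> dual_lattice G \<Longrightarrow> a - b \<in> dual_lattice G"
  using dual_lattice_add[of a G "- b"] dual_lattice_uminus[of b G] by simp

lemma dual_lattice_sum: "(\<And>i. i \<in> I \<Longrightarrow> f i \<in> dual_lattice G) \<Longrightarrow> sum f I \<in> dual_lattice G"
  by (induction I rule: infinite_finite_induct) (auto intro: dual_lattice_zero dual_lattice_add)

lemma full_lattice_obtains_basis:
  fixes G :: "(real^'n) set"
  assumes "full_lattice G"
  obtains b :: "'n \<Rightarrow> real^'n"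
  where "\<And>y. (\<forall>k. y \<bullet> b k = 0) \<Longrightarrow> y = 0"
    and "\<And>y. y \<in> dual_lattice G \<longleftrightarrow> (\<forall>k. y \<bullet> b k \<in> \<int>)"
proof -
  from assms obtain b :: "'n \<Rightarrow> real^'n" where b: "inj b" "independent (range b)"
    "G = {\<Sum>i\<in>UNIV. of_int (k i) *\<^sub>R b i | k. True}"
    by (auto simp: full_lattice_def)
  have bG: "b k \<in> G" for k
  proof -
    have "(\<Sum>i\<in>UNIV. of_int (if i = k then 1 else 0) *\<^sub>R b i) = (\<Sum>i\<in>UNIV. if i = k then b i else 0)"
      by (rule sum.cong) auto
    then have "(\<Sum>i\<in>UNIV. of_int (if i = k then 1 else 0) *\<^sub>R b i) = b k"
      by simp
    then show ?thesis
      unfolding b(3) by (intro CollectI exI[of _ "\<lambda>i. if i = k then 1 else 0"]) simp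
  qed
  have span: "span (range b) = UNIV"
  proof -
    have "card (range b) = CARD('n)"
      using b(1) by (simp add: card_image)
    then have "UNIV \<subseteq> span (range b)"
      using card_ge_dim_independent[of "range b" UNIV] b(2) by auto
    then show ?thesis by auto
  qed
  have zero: "y = 0" if "\<forall>k. y \<bullet> b k = 0" for y
  proof -
    have "y \<bullet> v = 0" if "v \<in> span (range b)" for v
      using that by (induction rule: span_induct)
        (use \<open>\<forall>k. y \<bullet> b k = 0\<close> in \<open>auto simp: subspace_def inner_add_right\<close>)
    then show ?thesis
      using span by (metis UNIV_I inner_eq_zero_iff)
  qed
  have "y \<in> dual_lattice G \<longleftrightarrow> (\<forall>k. y \<bullet> b k \<in> \<int>)" for y
  proof
    assume "\<forall>k. y \<bullet> b k \<in> \<int>"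
    then have "y \<bullet> (\<Sum>i\<in>UNIV. of_int (k i) *\<^sub>R b i) \<in> \<int>" for k :: "'n \<Rightarrow> int"
      by (simp add: inner_sum_right Ints_sum Ints_mult)
    then show "y \<in> dual_lattice G"
      unfolding dual_lattice_def b(3) by blast
  qed (use bG in \<open>auto simp: dual_lattice_def\<close>)
  with zero that show ?thesis by blast
qed

lemma finite_bounded_integer_vectors: "finite {v :: real^'n. \<forall>k. v $ k \<in> \<int> \<and> \<bar>v $ k\<bar> \<le> M}"
proof -
  define N where "N = nat (ceiling M)"
  have "{v :: real^'n. \<forall>k. v $ k \<in> \<int> \<and> \<bar>v $ k\<bar> \<le> M} \<subseteq>
      (\<lambda>f. \<chi> k. of_int (f k)) ` (PiE UNIV (\<lambda>_. {- int N..int N}))"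
  proof
    fix v :: "real^'n" assume v: "v \<in> {v. \<forall>k. v $ k \<in> \<int> \<and> \<bar>v $ k\<bar> \<le> M}"
    then have "\<forall>k. \<exists>m. v $ k = of_int m"
      by (metis (mono_tags) Ints_cases mem_Collect_eq)
    then obtain f where f: "\<And>k. v $ k = of_int (f k)"
      by metis
    have "\<bar>f k\<bar> \<le> int N" for k
    proof -
      have "\<bar>real_of_int (f k)\<bar> \<le> M"
        using v f[of k] by (metis (mono_tags) mem_Collect_eq)
      then show ?thesis
        unfolding N_def by linarith
    qed
    then have "restrict f UNIV \<in> PiE UNIV (\<lambda>_. {- int N..int N})"
      by (auto simp: abs_le_iff PiE_iff) (smt (verit))
    moreover have "v = (\<chi> k. of_int (restrict f UNIV k))"
      using f by (simp add: vec_eq_iff)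
    ultimately show "v \<in> (\<lambda>f. \<chi> k. of_int (f k)) ` (PiE UNIV (\<lambda>_. {- int N..int N}))"
      by blast
  qed
  moreover have "finite ((\<lambda>f. \<chi> k. of_int (f k) :: real^'n) ` (PiE UNIV (\<lambda>_. {- int N..int N})))"
    by (intro finite_imageI finite_PiE) auto
  ultimately show ?thesis
    using finite_subset by blast
qed

lemma finite_dual_lattice_Int_cball:
  fixes G :: "(real^'n) set"
  assumes "full_lattice G"
  shows "finite (dual_lattice G \<inter> cball 0 R)"
proof -
  obtain b :: "'n \<Rightarrow> real^'n" where b: "\<And>y. (\<forall>k. y \<bullet> b k = 0) \<Longrightarrow> y = 0"
    "\<And>y. y \<in> dual_lattice G \<longleftrightarrow> (\<forall>k. y \<bullet> b k \<in> \<int>)"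
    using full_lattice_obtains_basis[OF assms] by metis
  define \<phi> where "\<phi> y = (\<chi> k. y \<bullet> b k)" for y
  have "inj \<phi>"
  proof (rule injI)
    fix x y assume "\<phi> x = \<phi> y"
    then have "\<forall>k. (x - y) \<bullet> b k = 0"
      by (auto simp: \<phi>_def vec_eq_iff inner_diff_left)
    then show "x = y" using b(1) by fastforce
  qed
  have "\<bar>y \<bullet> b k\<bar> \<le> R * (\<Sum>k\<in>UNIV. norm (b k))" if "norm y \<le> R" for y k
  proof -
    have "\<bar>y \<bullet> b k\<bar> \<le> norm y * norm (b k)"
      by (rule Cauchy_Schwarz_ineq2)
    also have "\<dots> \<le> R * (\<Sum>k\<in>UNIV. norm (b k))"
      using that order.trans[OF norm_ge_zero that] member_le_sum[of k UNIV "\<lambda>k. norm (b k)"]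
      by (intro mult_mono) auto
    finally show ?thesis .
  qed
  then have "\<phi> ` (dual_lattice G \<inter> cball 0 R) \<subseteq>
      {v. \<forall>k. v $ k \<in> \<int> \<and> \<bar>v $ k\<bar> \<le> R * (\<Sum>k\<in>UNIV. norm (b k))}"
    using b(2) by (auto simp: \<phi>_def)
  then have "finite (\<phi> ` (dual_lattice G \<inter> cball 0 R))"
    using finite_bounded_integer_vectors finite_subset by blast
  then show ?thesis
    by (rule finite_imageD) (rule inj_on_subset[OF \<open>inj \<phi>\<close> subset_UNIV])
qed

definition cube_points :: "(real^'n) set \<Rightarrow> (real^'n) list \<Rightarrow> real^'n \<Rightarrow> (real^'n) set" where
  "cube_points L S t = {y\<in>L. y + t \<in> cube S}"

lemma mem_cube_points_iff_coord:
  assumes S: "basis_list (S :: (real^'n) list)"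
  shows "y \<in> cube_points L S t \<longleftrightarrow>
    y \<in> L \<and> (\<forall>k<CARD('n). 0 \<le> coord S (y + t) k \<and> coord S (y + t) k < 1)"
  by (simp add: cube_points_def cube_iff_coord[OF S])

lemma int_span_iff_coord:
  assumes S: "basis_list (S :: (real^'n) list)"
  shows "g \<in> int_span S \<longleftrightarrow> (\<forall>j<CARD('n). coord S g j \<in> \<int>)"
proof
  assume "g \<in> int_span S"
  then obtain k where "(\<Sum>j<CARD('n). of_int (k j) *\<^sub>R S!j) = g"
    using basis_list_length[OF S] by (auto simp: int_span_def)
  then show "\<forall>j<CARD('n). coord S g j \<in> \<int>"
    using coord_unique[OF S] by simp
next
  assume "\<forall>j<CARD('n). coord S g j \<in> \<int>"
  then have "\<forall>j. \<exists>m. j < CARD('n) \<longrightarrow> coord S g j = of_int m"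
    by (metis Ints_cases)
  then obtain k where k: "\<And>j. j < CARD('n) \<Longrightarrow> coord S g j = of_int (k j)"
    by metis
  have "g = (\<Sum>j<length S. of_int (k j) *\<^sub>R S!j)"
    using coord_sum[OF S, of g] k basis_list_length[OF S] by simp
  then show "g \<in> int_span S"
    unfolding int_span_def by blast
qed

lemma int_span_subset_dual_lattice: "set S \<subseteq> dual_lattice G \<Longrightarrow> int_span S \<subseteq> dual_lattice G"
  unfolding int_span_def by (auto intro!: dual_lattice_sum dual_lattice_scaleR_of_int)

lemma int_span_translate_into_cube:
  assumes S: "basis_list (S :: (real^'n) list)"
  obtains g where "g \<in> int_span S" and "v + g \<in> cube S"
proof
  define g where "g = (\<Sum>j<CARD('n). of_int (- floor (coord S v j)) *\<^sub>R S!j)"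
  have cg: "coord S g j = - floor (coord S v j)" if "j < CARD('n)" for j
    using coord_unique[OF S g_def[symmetric] that] by simp
  then show "g \<in> int_span S"
    by (simp add: int_span_iff_coord[OF S])
  show "v + g \<in> cube S"
    unfolding cube_iff_coord[OF S] using cg by (simp add: coord_add[OF S]) linarith
qed

lemma cube_subset_cball: "cube S \<subseteq> cball 0 (\<Sum>j<length S. norm (S!j))"
proof
  fix v assume "v \<in> cube S"
  then obtain l where l: "\<forall>j<length S. 0 \<le> l j \<and> l j < 1" "v = (\<Sum>j<length S. l j *\<^sub>R S!j)"
    by (auto simp: cube_def)
  have "norm v \<le> (\<Sum>j<length S. norm (l j *\<^sub>R S!j))"
    unfolding l(2) by (rule norm_sum)
  also have "\<dots> \<le> (\<Sum>j<length S. norm (S!j))"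
    using l(1) by (intro sum_mono) (auto intro!: mult_left_le_one_le)
  finally show "v \<in> cball 0 (\<Sum>j<length S. norm (S!j))" by simp
qed

lemma finite_cube_points:
  assumes "full_lattice G"
  shows "finite (cube_points (dual_lattice G) S t)"
proof -
  have "cube_points (dual_lattice G) S t \<subseteq> dual_lattice G \<inter> cball 0 ((\<Sum>j<length S. norm (S!j)) + norm t)"
  proof
    fix y assume "y \<in> cube_points (dual_lattice G) S t"
    then have "y \<in> dual_lattice G" "norm (y + t) \<le> (\<Sum>j<length S. norm (S!j))"
      using cube_subset_cball[of S] by (auto simp: cube_points_def)
    moreover have "norm y \<le> norm (y + t) + norm t"
      using norm_triangle_ineq4[of "y + t" t] by simp
    ultimately show "y \<in> dual_lattice G \<inter> cball 0 ((\<Sum>j<length S. norm (S!j)) + norm t)"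
      by auto
  qed
  then show ?thesis
    using finite_dual_lattice_Int_cball[OF assms] finite_subset by blast
qed

lemma card_cube_points_pos:
  assumes G: "full_lattice G" and S: "basis_list S" "set S \<subseteq> dual_lattice G"
  shows "card (cube_points (dual_lattice G) S t) > 0"
proof -
  obtain g where "g \<in> int_span S" "t + g \<in> cube S"
    using int_span_translate_into_cube[OF S(1)] .
  then have "g \<in> cube_points (dual_lattice G) S t"
    using int_span_subset_dual_lattice[OF S(2)] by (auto simp: cube_points_def add.commute)
  then show ?thesis
    using finite_cube_points[OF G] card_gt_0_iff by blast
qed

lemma translate_int_span_eq_iff:
  assumes S: "basis_list (S :: (real^'n) list)"
  shows "(\<lambda>w. y + w) ` int_span S = (\<lambda>w. y' + w) ` int_span S \<longleftrightarrow> (\<forall>j<CARD('n). coord S (y - y') j \<in> \<int>)"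
proof -
  have coset: "(\<lambda>w. y + w) ` int_span S = {v. \<forall>j<CARD('n). coord S (v - y) j \<in> \<int>}" for y
    unfolding int_span_iff_coord[OF S, symmetric]
    by (auto simp: image_iff) (metis add.commute diff_add_cancel)
  show ?thesis
  proof
    assume "(\<lambda>w. y + w) ` int_span S = (\<lambda>w. y' + w) ` int_span S"
    moreover have "y \<in> (\<lambda>w. y + w) ` int_span S"
      unfolding coset by (simp add: coord_zero[OF S])
    ultimately show "\<forall>j<CARD('n). coord S (y - y') j \<in> \<int>"
      unfolding coset by simp
  next
    assume y: "\<forall>j<CARD('n). coord S (y - y') j \<in> \<int>"
    have "coord S (v - y) j \<in> \<int> \<longleftrightarrow> coord S (v - y') j \<in> \<int>" if j: "j < CARD('n)" for v j
    proof -
      have "coord S (v - y') j = coord S (v - y) j + coord S (y - y') j"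
        using coord_add[OF S j, of "v - y" "y - y'"] by simp
      moreover have "coord S (y - y') j \<in> \<int>"
        using y j by blast
      ultimately show ?thesis
        by (metis Ints_add Ints_diff add_diff_cancel_right')
    qed
    then show "(\<lambda>w. y + w) ` int_span S = (\<lambda>w. y' + w) ` int_span S"
      unfolding coset by blast
  qed
qed

text \<open>Each coset of \<open>int_span S\<close> in the dual lattice has exactly one representative \<open>y\<close>
  with \<open>y + t\<close> in the half-open cube.\<close>

lemma lattice_index_eq_card_cube_points:
  fixes G :: "(real^'n) set" and S :: "(real^'n) list"
  assumes S: "basis_list S" "set S \<subseteq> dual_lattice G"
  shows "lattice_index (dual_lattice G) S = card (cube_points (dual_lattice G) S t)"
proof -
  let ?L = "dual_lattice G"
  let ?A = "cube_points ?L S t"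
  define F where "F y = (\<lambda>w. y + w) ` int_span S" for y :: "real^'n"
  have "F ` ?L \<subseteq> F ` ?A"
  proof
    fix c assume "c \<in> F ` ?L"
    then obtain y where y: "y \<in> ?L" "c = F y" by auto
    obtain g where g: "g \<in> int_span S" "y + t + g \<in> cube S"
      using int_span_translate_into_cube[OF S(1)] .
    have "y + g \<in> ?A"
      using g y(1) int_span_subset_dual_lattice[OF S(2)]
      by (auto simp: cube_points_def dual_lattice_add add.commute add.left_commute)
    moreover have "F (y + g) = F y"
      using g(1) by (simp add: F_def translate_int_span_eq_iff[OF S(1)] int_span_iff_coord[OF S(1)])
    ultimately show "c \<in> F ` ?A" using y(2) by blast
  qed
  then have img: "F ` ?L = F ` ?A"
    by (auto simp: cube_points_def)
  have "inj_on F ?A"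
  proof (rule inj_onI)
    fix a a' assume a: "a \<in> ?A" "a' \<in> ?A" "F a = F a'"
    have "coord S (a - a') j = 0" if j: "j < CARD('n)" for j
    proof -
      have "coord S (a - a') j \<in> \<int>"
        using a(3) j by (simp add: F_def translate_int_span_eq_iff[OF S(1)])
      moreover have "coord S (a - a') j = coord S (a + t) j - coord S (a' + t) j"
        using coord_diff[OF S(1) j, of "a + t" "a' + t"] by simp
      moreover have "0 \<le> coord S (a + t) j" "coord S (a + t) j < 1"
        "0 \<le> coord S (a' + t) j" "coord S (a' + t) j < 1"
        using a(1,2) j by (auto simp: cube_points_def cube_iff_coord[OF S(1)])
      ultimately show ?thesis
        by (intro Ints_nonzero_abs_less1) auto
    qed
    then have "a - a' = 0"
      using coord_eq_0_iff[OF S(1)] by blast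
    then show "a = a'"
      by simp
  qed
  then have "card (F ` ?A) = card ?A"
    by (rule card_image)
  then show ?thesis
    unfolding lattice_index_def F_def[symmetric] img .
qed

section \<open>Points of a chamber are generic\<close>

definition arr_basis :: "(real^'n) set \<Rightarrow> (real^'n) set set \<Rightarrow> (real^'n) list \<Rightarrow> bool" where
  "arr_basis L A S \<longleftrightarrow> basis_list S \<and> set S \<subseteq> L \<and> (\<forall>x\<in>set S. {v. x \<bullet> v = 0} \<in> A)"

lemma dim_orthogonal_omit_nth:
  fixes S :: "(real^'n) list"
  assumes S: "basis_list S" and j: "j < CARD('n)"
  shows "dim {v. \<forall>x\<in>nth S ` ({..<CARD('n)} - {j}). x \<bullet> v = 0} = 1"
proof -
  let ?W = "nth S ` ({..<CARD('n)} - {j})"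
  have len: "length S = CARD('n)" and d: "distinct S" and ind: "independent (set S)"
    using S by (auto simp: basis_list_def)
  have "inj_on (nth S) ({..<CARD('n)} - {j})"
    using d len by (auto simp: inj_on_def nth_eq_iff_index_eq)
  then have card: "card ?W = CARD('n) - 1"
    using card_image j by fastforce
  have "?W \<subseteq> set S"
    using len by (auto simp: set_conv_nth)
  then have "independent ?W"
    using independent_mono[OF ind] by blast
  then have dimW: "dim (span ?W) = CARD('n) - 1"
    using dim_eq_card_independent[of ?W] card by simp
  have "{y \<in> UNIV. \<forall>x \<in> span ?W. orthogonal x y} = {v. \<forall>x\<in>?W. x \<bullet> v = 0}"
  proof (intro set_eqI iffI)
    fix v assume "v \<in> {v. \<forall>x\<in>?W. x \<bullet> v = 0}"
    then have "orthogonal v x" if "x \<in> span ?W" for x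
      by (intro orthogonal_to_span[OF that]) (auto simp: orthogonal_def inner_commute)
    then show "v \<in> {y \<in> UNIV. \<forall>x \<in> span ?W. orthogonal x y}"
      by (auto simp: orthogonal_commute)
  qed (auto simp: orthogonal_def span_base)
  moreover have "dim {y \<in> UNIV. \<forall>x \<in> span ?W. orthogonal x y} + dim (span ?W) = CARD('n)"
    using dim_subspace_orthogonal_to_vectors[of "span ?W" UNIV] by auto
  ultimately show ?thesis
    using dimW j by simp
qed

text \<open>If the \<open>j\<close>-th coordinate of \<open>y + t\<close> were an integer \<open>m\<close>, then \<open>t - (m S!j - y)\<close> would be
  orthogonal to the line cut out by the other hyperplanes of \<open>S\<close>.\<close>

lemma coord_not_Ints_chamber:
  fixes S :: "(real^'n) list" and G :: "(real^'n) set"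
  assumes S: "arr_basis (dual_lattice G) A S"
    and t: "t \<in> chamber_set (dual_lattice G) A" and y: "y \<in> dual_lattice G" and j: "j < CARD('n)"
  shows "coord S (y + t) j \<notin> \<int>"
proof
  assume "coord S (y + t) j \<in> \<int>"
  then obtain m where m: "coord S (y + t) j = of_int m"
    by (metis Ints_cases)
  have gS: "basis_list S" and SL: "set S \<subseteq> dual_lattice G" and SA: "\<forall>x\<in>set S. {v. x \<bullet> v = 0} \<in> A"
    using S by (auto simp: arr_basis_def)
  have len: "length S = CARD('n)"
    using basis_list_length[OF gS] .
  let ?W = "nth S ` ({..<CARD('n)} - {j})"
  define L where "L = {v. \<forall>x\<in>?W. x \<bullet> v = 0}"
  define w where "w = (y + t) - of_int m *\<^sub>R S!j"
  have "w \<bullet> v = 0" if "v \<in> L" for v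
  proof -
    have "of_int m *\<^sub>R S!j + (\<Sum>k\<in>{..<CARD('n)} - {j}. coord S (y + t) k *\<^sub>R S!k) = y + t"
      using coord_sum[OF gS, of "y + t"] j m by (simp add: sum.remove[of "{..<CARD('n)}" j])
    then have "w = (\<Sum>k\<in>{..<CARD('n)} - {j}. coord S (y + t) k *\<^sub>R S!k)"
      unfolding w_def by (metis add_diff_cancel_left')
    then show ?thesis
      using that by (simp add: inner_sum_left L_def)
  qed
  moreover have "\<exists>H\<subseteq>A. L = \<Inter>H \<and> dim L = 1"
  proof (intro exI conjI)
    show "(\<lambda>x. {v. x \<bullet> v = 0}) ` ?W \<subseteq> A"
      using SA len by (auto simp: set_conv_nth)
    show "L = \<Inter>((\<lambda>x. {v. x \<bullet> v = 0}) ` ?W)"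
      unfolding L_def by blast
    show "dim L = 1"
      unfolding L_def by (rule dim_orthogonal_omit_nth[OF gS j])
  qed
  ultimately have "w \<in> dual_arr_union A"
    unfolding dual_arr_union_def by blast
  moreover have "of_int m *\<^sub>R S!j - y \<in> dual_lattice G"
    using SL j len y by (intro dual_lattice_diff dual_lattice_scaleR_of_int) auto
  moreover have "t = (of_int m *\<^sub>R S!j - y) + w"
    by (simp add: w_def)
  ultimately show False
    using t unfolding chamber_set_def by blast
qed

text \<open>On a connected component of the chamber set no coordinate of \<open>y + t\<close> can cross an
  integer, so the set \<open>{t \<in> \<Delta>. y + t \<in> cube S}\<close> is clopen in \<open>\<Delta>\<close>.\<close>

lemma cube_points_chamber_invariant:
  fixes S :: "(real^'n) list" and G :: "(real^'n) set"
  assumes S: "arr_basis (dual_lattice G) A S"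
    and D: "D \<in> components (chamber_set (dual_lattice G) A)" and t: "t \<in> D" "t' \<in> D"
  shows "cube_points (dual_lattice G) S t = cube_points (dual_lattice G) S t'"
proof -
  have gS: "basis_list S"
    using S by (simp add: arr_basis_def)
  have "y + t \<in> cube S \<longleftrightarrow> y + t' \<in> cube S" if y: "y \<in> dual_lattice G" for y
  proof -
    define T where "T = {u \<in> D. y + u \<in> cube S}"
    have gen: "coord S y j + coord S u j \<noteq> 0 \<and> coord S y j + coord S u j \<noteq> 1"
      if "u \<in> D" "j < CARD('n)" for u j
    proof -
      have "coord S (y + u) j \<notin> \<int>"
        using coord_not_Ints_chamber[OF S _ y that(2)] in_components_subset[OF D] that(1) by blast
      then show ?thesis
        using coord_add[OF gS that(2)] by (metis Ints_0 Ints_1)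
    qed
    have cont: "continuous_on UNIV (\<lambda>u. coord S y j + coord S u j)" if "j < CARD('n)" for j
      by (intro continuous_intros continuous_on_coord[OF gS that])
    have "T = D \<inter> (\<Inter>j\<in>{..<CARD('n)}. {u. 0 < coord S y j + coord S u j} \<inter> {u. coord S y j + coord S u j < 1})"
      unfolding T_def using gen by (auto simp: cube_iff_coord[OF gS] coord_add[OF gS] order_le_less)
    then have "openin (top_of_set D) T"
      by (simp only:) (intro openin_open_Int open_INT ballI open_Int open_Collect_less cont continuous_intros; simp)
    moreover have "T = D \<inter> (\<Inter>j\<in>{..<CARD('n)}. {u. 0 \<le> coord S y j + coord S u j} \<inter> {u. coord S y j + coord S u j \<le> 1})"
      unfolding T_def using gen by (auto simp: cube_iff_coord[OF gS] coord_add[OF gS] order_le_less)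
    then have "closedin (top_of_set D) T"
      by (simp only:) (intro closedin_closed_Int closed_INT ballI closed_Int closed_Collect_le cont continuous_intros; simp)
    ultimately have "T = {} \<or> T = D"
      using in_components_connected[OF D] connected_clopen by blast
    then show ?thesis
      using t unfolding T_def by blast
  qed
  then show ?thesis
    unfolding cube_points_def by blast
qed

section \<open>Rescaling the defining forms\<close>

lemma cpair_add: "cpair (a + b) z = cpair a z + cpair b z"
  by (simp add: cpair_def sum.distrib distrib_right)

lemma cpair_diff: "cpair (a - b) z = cpair a z - cpair b z"
  by (simp add: cpair_def sum_subtractf left_diff_distrib)

lemma cpair_scaleR: "cpair (r *\<^sub>R a) z = complex_of_real r * cpair a z"
  by (simp add: cpair_def sum_distrib_left mult.assoc)

lemma exp_cpair_scaleR_of_nat: "exp (cpair (real q *\<^sub>R x) z) = exp (cpair x z) ^ q"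
  by (simp add: cpair_scaleR exp_of_nat_mult)

lemma idx_bij: "bij_betw (idx :: 'n::finite \<Rightarrow> nat) UNIV {..<CARD('n)}"
proof -
  have "\<exists>h. bij_betw h (UNIV :: 'n set) {..<CARD('n)}"
    using ex_bij_betw_finite_nat[of "UNIV :: 'n set"] by (simp add: atLeast0LessThan)
  then show ?thesis
    unfolding idx_def by (rule someI_ex)
qed

lemma idx_less: "idx (r :: 'n::finite) < CARD('n)"
  using idx_bij bij_betwE by blast

lemma idx_eq_iff: "idx (r :: 'n::finite) = idx s \<longleftrightarrow> r = s"
  using idx_bij by (auto simp: bij_betw_def inj_def)

lemma idx_surj: "j < CARD('n) \<Longrightarrow> \<exists>r :: 'n::finite. idx r = j"
  using idx_bij by (metis bij_betw_def imageE lessThan_iff)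

lemma list_det_list_update:
  fixes S :: "(real^'n::finite) list"
  assumes "length S = CARD('n)" and "idx k = j"
  shows "list_det (S[j := v]) = det (\<chi> r. if r = k then v else S ! idx r)"
proof -
  have "(\<chi> r. S[j := v] ! idx r) = (\<chi> r. if r = k then v else S ! idx r)"
    using assms idx_less[of k] by (auto simp: vec_eq_iff nth_list_update idx_eq_iff)
  then show ?thesis
    by (simp add: list_det_def)
qed

lemma list_det_update_scaleR:
  fixes S :: "(real^'n::finite) list"
  assumes len: "length S = CARD('n)" and j: "j < CARD('n)"
  shows "list_det (S[j := c *\<^sub>R S!j]) = c * list_det S"
proof -
  obtain k :: 'n where k: "idx k = j"
    using idx_surj[OF j] by blast
  have "(\<chi> r. if r = k then c *\<^sub>R S!j else S!idx r) = (\<chi> r. if r = k then c *s (S ! idx r) else S ! idx r)"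
    by (auto simp: vec_eq_iff k scalar_mult_eq_scaleR)
  then have "list_det (S[j := c *\<^sub>R S!j]) = det (\<chi> r. if r = k then c *s (S ! idx r) else S ! idx r)"
    using list_det_list_update[OF len k] by simp
  also have "\<dots> = c * list_det S"
    unfolding det_row_mul list_det_def by simp
  finally show ?thesis .
qed

lemma basis_list_I:
  fixes T :: "(real^'n) list"
  assumes len: "length T = CARD('n)"
    and indep: "\<And>l. (\<Sum>k<CARD('n). l k *\<^sub>R T!k) = 0 \<Longrightarrow> \<forall>k<CARD('n). l k = 0"
  shows "basis_list T"
proof -
  have "distinct T"
  proof (rule ccontr)
    assume "\<not> distinct T"
    then obtain a b where ab: "a < length T" "b < length T" "a \<noteq> b" "T!a = T!b"
      by (auto simp: distinct_conv_nth)
    define l where "l k = (if k = a then 1 else if k = b then -1 else 0 :: real)" for k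
    have "(\<Sum>k<CARD('n). l k *\<^sub>R T!k) = (\<Sum>k<CARD('n). (if k = a then T!a else 0) - (if k = b then T!b else 0))"
      by (rule sum.cong) (auto simp: l_def ab)
    also have "\<dots> = 0"
      using ab len by (simp add: sum_subtractf)
    finally show False
      using indep[of l] ab len by (auto simp: l_def)
  qed
  moreover have "independent (set T)"
    unfolding independent_explicit
  proof (intro conjI allI impI ballI)
    fix c v assume c: "(\<Sum>v\<in>set T. c v *\<^sub>R v) = 0" and v: "v \<in> set T"
    have "(\<Sum>k<CARD('n). c (T!k) *\<^sub>R T!k) = 0"
      using sum_lessThan_nth_distinct[OF \<open>distinct T\<close>, of "\<lambda>v. c v *\<^sub>R v"] c len by simp
    then have "\<forall>k<CARD('n). c (T!k) = 0"
      by (rule indep)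
    then show "c v = 0"
      using v len by (auto simp: set_conv_nth)
  qed simp
  ultimately show ?thesis
    using len by (simp add: basis_list_def)
qed

lemma basis_list_rescale:
  fixes S T :: "(real^'n) list"
  assumes S: "basis_list S" and len: "length T = CARD('n)"
    and par: "\<And>k. k < CARD('n) \<Longrightarrow> \<exists>c. c \<noteq> 0 \<and> T!k = c *\<^sub>R S!k"
  shows "basis_list T"
proof (rule basis_list_I[OF len])
  obtain c where c: "\<And>k. k < CARD('n) \<Longrightarrow> c k \<noteq> 0 \<and> T!k = c k *\<^sub>R S!k"
    using par by metis
  fix l assume "(\<Sum>k<CARD('n). l k *\<^sub>R T!k) = 0"
  moreover have "(\<Sum>k<CARD('n). l k *\<^sub>R T!k) = (\<Sum>k<CARD('n). (l k * c k) *\<^sub>R S!k)"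
    by (rule sum.cong) (auto simp: c)
  ultimately have "\<forall>k<CARD('n). l k * c k = 0"
    using basis_list_lincomb_eq_0[OF S, of "\<lambda>k. l k * c k"] by auto
  then show "\<forall>k<CARD('n). l k = 0"
    using c by auto
qed

lemma basis_list_update_scaleR:
  fixes S :: "(real^'n) list"
  assumes S: "basis_list S" and j: "j < CARD('n)" and c: "c \<noteq> 0"
  shows "basis_list (S[j := c *\<^sub>R S!j])"
proof (rule basis_list_rescale[OF S])
  show "length (S[j := c *\<^sub>R S!j]) = CARD('n)"
    using basis_list_length[OF S] by simp
  fix k assume "k < CARD('n)"
  show "\<exists>c'. c' \<noteq> 0 \<and> S[j := c *\<^sub>R S!j]!k = c' *\<^sub>R S!k"
  proof (cases "k = j")
    case True
    then show ?thesis
      using c j basis_list_length[OF S] by (intro exI[of _ c]) simp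
  next
    case False
    then show ?thesis
      by (intro exI[of _ 1]) simp
  qed
qed

lemma coord_update_scaleR:
  fixes S :: "(real^'n) list"
  assumes S: "basis_list S" and j: "j < CARD('n)" and c: "c \<noteq> 0" and k: "k < CARD('n)"
  shows "coord (S[j := c *\<^sub>R S!j]) v k = (if k = j then coord S v j / c else coord S v k)"
proof (rule coord_unique[OF basis_list_update_scaleR[OF S j c] _ k])
  have "(\<Sum>k<CARD('n). (if k = j then coord S v j / c else coord S v k) *\<^sub>R S[j := c *\<^sub>R S!j] ! k)
      = (\<Sum>k<CARD('n). coord S v k *\<^sub>R S!k)"
    using c basis_list_length[OF S] by (intro sum.cong) (auto simp: nth_list_update)
  then show "(\<Sum>k<CARD('n). (if k = j then coord S v j / c else coord S v k) *\<^sub>R S[j := c *\<^sub>R S!j] ! k) = v"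
    using coord_sum[OF S] by simp
qed

lemma arr_basis_update_scaleR:
  fixes S :: "(real^'n) list"
  assumes S: "arr_basis L A S" and j: "j < CARD('n)" and c: "c \<noteq> 0" and cL: "c *\<^sub>R S!j \<in> L"
  shows "arr_basis L A (S[j := c *\<^sub>R S!j])"
proof -
  have gS: "basis_list S"
    using S by (simp add: arr_basis_def)
  have sub: "set (S[j := c *\<^sub>R S!j]) \<subseteq> insert (c *\<^sub>R S!j) (set S)"
    by (rule set_update_subset_insert)
  have "{v. (c *\<^sub>R S!j) \<bullet> v = 0} = {v. S!j \<bullet> v = 0}"
    using c by simp
  moreover have "S!j \<in> set S"
    using j basis_list_length[OF gS] by simp
  ultimately have "\<forall>x\<in>insert (c *\<^sub>R S!j) (set S). {v. x \<bullet> v = 0} \<in> A"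
    using S by (simp add: arr_basis_def)
  moreover have "insert (c *\<^sub>R S!j) (set S) \<subseteq> L"
    using S cL by (simp add: arr_basis_def)
  ultimately show ?thesis
    using sub basis_list_update_scaleR[OF gS j c] unfolding arr_basis_def by blast
qed

lemma mu_coef_split_nth:
  fixes S :: "(real^'n) list"
  assumes len: "length S = CARD('n)" and j: "j < CARD('n)"
  shows "mu_coef L S t z = (1 / of_nat (lattice_index L S)) * complex_of_real (list_det S) *
     (1 / (1 - exp (cpair (S!j) z))) * (\<Prod>k\<in>{..<CARD('n)} - {j}. 1 / (1 - exp (cpair (S!k) z))) *
     (\<Sum>y\<in>cube_points L S t. exp (cpair y z))"
  using len j
  by (simp add: mu_coef_def cube_points_def prod.remove[of "{..<CARD('n)}" j] mult.assoc)

lemma mem_cube_points_update_scaleR_of_nat: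
  fixes S :: "(real^'n) list"
  assumes S: "basis_list S" and j: "j < CARD('n)" and m: "m > 0"
  shows "y \<in> cube_points L (S[j := real m *\<^sub>R S!j]) t \<longleftrightarrow> y \<in> L \<and> (\<forall>k<CARD('n).
    if k = j then 0 \<le> coord S (y + t) j \<and> coord S (y + t) j < real m
    else 0 \<le> coord S (y + t) k \<and> coord S (y + t) k < 1)"
proof -
  have "(0 \<le> coord (S[j := real m *\<^sub>R S!j]) v k \<and> coord (S[j := real m *\<^sub>R S!j]) v k < 1) \<longleftrightarrow>
      (if k = j then 0 \<le> coord S v j \<and> coord S v j < real m else 0 \<le> coord S v k \<and> coord S v k < 1)"
    if "k < CARD('n)" for v k
    using coord_update_scaleR[OF S j _ that, of "real m" v] m by (simp add: divide_simps)
  then show ?thesis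
    using mem_cube_points_iff_coord[OF basis_list_update_scaleR[OF S j], of "real m" y L t] m
    by auto
qed

lemma cube_points_update_scaleR_of_nat:
  fixes S :: "(real^'n) list" and G :: "(real^'n) set"
  assumes S: "basis_list S" "set S \<subseteq> dual_lattice G" and j: "j < CARD('n)" and m: "m > 0"
  shows "bij_betw (\<lambda>(y, q). y + real q *\<^sub>R S!j) (cube_points (dual_lattice G) S t \<times> {..<m})
           (cube_points (dual_lattice G) (S[j := real m *\<^sub>R S!j]) t)"
proof -
  let ?L = "dual_lattice G"
  let ?S' = "S[j := real m *\<^sub>R S!j]"
  let ?c = "\<lambda>v k. coord S v k"
  have xL: "S!j \<in> ?L"
    using S j basis_list_length[OF S(1)] by auto
  have shift: "?c (y + real q *\<^sub>R S!j + t) k = ?c (y + t) k + (if k = j then real q else 0)"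
    if "k < CARD('n)" for y q k
    using coord_add_scaleR_nth[OF S(1) j that, of "y + t" "real q"] by (simp add: algebra_simps)
  note mem = mem_cube_points_iff_coord[OF S(1), of _ ?L t]
  note mem' = mem_cube_points_update_scaleR_of_nat[OF S(1) j m, of _ ?L t]
  show ?thesis
  proof (rule bij_betw_imageI)
    show "inj_on (\<lambda>(y, q). y + real q *\<^sub>R S!j) (cube_points ?L S t \<times> {..<m})"
    proof (rule inj_onI, clarify)
      fix y q y' q' assume a: "y \<in> cube_points ?L S t" "y' \<in> cube_points ?L S t"
        and eq: "y + real q *\<^sub>R S!j = y' + real q' *\<^sub>R S!j"
      have "?c (y + t) j + real q = ?c (y' + t) j + real q'"
        using arg_cong[OF eq, of "\<lambda>v. ?c (v + t) j"] shift[OF j] by simp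
      moreover have "0 \<le> ?c (y + t) j" "?c (y + t) j < 1" "0 \<le> ?c (y' + t) j" "?c (y' + t) j < 1"
        using a mem j by blast+
      ultimately have "q = q'"
        by linarith
      then show "y = y' \<and> q = q'"
        using eq by simp
    qed
    show "(\<lambda>(y, q). y + real q *\<^sub>R S!j) ` (cube_points ?L S t \<times> {..<m}) = cube_points ?L ?S' t"
    proof (intro set_eqI iffI)
      fix w assume "w \<in> (\<lambda>(y, q). y + real q *\<^sub>R S!j) ` (cube_points ?L S t \<times> {..<m})"
      then obtain y q where y: "y \<in> cube_points ?L S t" and q: "q < m" and w: "w = y + real q *\<^sub>R S!j"
        by auto
      have "w \<in> ?L"
        using y xL unfolding w by (auto simp: mem dual_lattice_add dual_lattice_scaleR_of_nat)
      moreover have "real q + 1 \<le> real m"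
        using q by simp
      ultimately show "w \<in> cube_points ?L ?S' t"
        using y unfolding mem mem' w by (auto simp: shift)
    next
      fix w assume w: "w \<in> cube_points ?L ?S' t"
      define q where "q = nat (floor (?c (w + t) j))"
      have c: "0 \<le> ?c (w + t) j" "?c (w + t) j < real m"
        using w j unfolding mem' by metis+
      then have q: "real q \<le> ?c (w + t) j" "?c (w + t) j < real q + 1" "q < m"
        unfolding q_def by linarith+
      define y where "y = w + (- real q) *\<^sub>R S!j"
      have "y \<in> ?L"
        using w xL dual_lattice_add[of w G "(- real q) *\<^sub>R S!j"]
          dual_lattice_scaleR_of_int[of "S!j" G "- int q"]
        by (simp add: mem' y_def)
      moreover have "?c (y + t) k = ?c (w + t) k + (if k = j then - real q else 0)"
        if "k < CARD('n)" for k
        using coord_add_scaleR_nth[OF S(1) j that, of "w + t" "- real q"] by (simp add: y_def algebra_simps)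
      ultimately have "y \<in> cube_points ?L S t"
        using w q unfolding mem mem' by auto
      moreover have "w = y + real q *\<^sub>R S!j"
        by (simp add: y_def)
      ultimately show "w \<in> (\<lambda>(y, q). y + real q *\<^sub>R S!j) ` (cube_points ?L S t \<times> {..<m})"
        using q(3) by force
    qed
  qed
qed

text \<open>Scaling \<open>x\<^sub>j\<close> by \<open>m\<close> multiplies the index and the determinant by \<open>m\<close> and the lattice
  sum by \<open>1 + e + \<dots> + e\<^sup>m\<^sup>-\<^sup>1\<close> (\<open>e = exp x\<^sub>j\<close>), which cancels against \<open>(1 - e\<^sup>m) = (1 - e) (1 + \<dots> + e\<^sup>m\<^sup>-\<^sup>1)\<close>.\<close>

lemma mu_coef_update_scaleR_of_nat:
  fixes S :: "(real^'n) list" and G :: "(real^'n) set"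
  assumes G: "full_lattice G" and S: "basis_list S" "set S \<subseteq> dual_lattice G"
    and j: "j < CARD('n)" and m: "m > 0" and E: "exp (cpair (real m *\<^sub>R S!j) z) \<noteq> 1"
  shows "mu_coef (dual_lattice G) (S[j := real m *\<^sub>R S!j]) t z = mu_coef (dual_lattice G) S t z"
proof -
  let ?L = "dual_lattice G"
  let ?S' = "S[j := real m *\<^sub>R S!j]"
  let ?A = "cube_points ?L S t"
  have len: "length S = CARD('n)"
    using basis_list_length[OF S(1)] .
  have "S!j \<in> ?L"
    using S(2) len j by auto
  then have "real m *\<^sub>R S!j \<in> ?L"
    by (rule dual_lattice_scaleR_of_nat)
  then have S': "basis_list ?S'" "set ?S' \<subseteq> ?L"
    using basis_list_update_scaleR[OF S(1) j, of "real m"] m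
      set_update_subset_insert[of S j "real m *\<^sub>R S!j"] S(2)
    by auto
  have bij: "bij_betw (\<lambda>(y, q). y + real q *\<^sub>R S!j) (?A \<times> {..<m}) (cube_points ?L ?S' t)"
    by (rule cube_points_update_scaleR_of_nat[OF S j m])
  define V where "V = card ?A"
  define N where "N = (\<Sum>y\<in>?A. exp (cpair y z))"
  define e where "e = exp (cpair (S!j) z)"
  define Q where "Q = (\<Sum>q<m. e ^ q)"
  define R where "R = (\<Prod>k\<in>{..<CARD('n)} - {j}. 1 / (1 - exp (cpair (S!k) z)))"
  have V: "lattice_index ?L S = V"
    unfolding V_def by (rule lattice_index_eq_card_cube_points[OF S])
  have V': "lattice_index ?L ?S' = V * m"
    using lattice_index_eq_card_cube_points[OF S'] bij_betw_same_card[OF bij]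
    by (simp add: V_def card_cartesian_product)
  have "(\<Sum>y\<in>cube_points ?L ?S' t. exp (cpair y z)) =
      (\<Sum>(y, q)\<in>?A \<times> {..<m}. exp (cpair (y + real q *\<^sub>R S!j) z))"
    using sum.reindex_bij_betw[OF bij, of "\<lambda>y. exp (cpair y z)"] by (simp add: case_prod_beta')
  also have "\<dots> = (\<Sum>(y, q)\<in>?A \<times> {..<m}. exp (cpair y z) * e ^ q)"
    by (rule sum.cong) (auto simp: cpair_add exp_add exp_cpair_scaleR_of_nat e_def)
  also have "\<dots> = N * Q"
    by (simp add: sum.cartesian_product[symmetric] sum_product N_def Q_def)
  finally have N': "(\<Sum>y\<in>cube_points ?L ?S' t. exp (cpair y z)) = N * Q" .
  have em: "exp (cpair (real m *\<^sub>R S!j) z) = e ^ m"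
    unfolding e_def by (rule exp_cpair_scaleR_of_nat)
  have factor: "1 - e ^ m = (1 - e) * Q"
    unfolding Q_def by (rule one_diff_power_eq)
  then have "Q \<noteq> 0" "1 - e \<noteq> 0"
    using E em by auto
  moreover have "V > 0"
    unfolding V_def by (rule card_cube_points_pos[OF G S])
  ultimately have "mu_coef ?L ?S' t z = (1 / of_nat V) * complex_of_real (list_det S) * (1 / (1 - e)) * R * N"
    unfolding mu_coef_split_nth[OF length_list_update[THEN trans, OF len] j] V' N' R_def
      list_det_update_scaleR[OF len j]
    using em len j m by (simp add: factor field_simps)
  also have "\<dots> = mu_coef ?L S t z"
    unfolding mu_coef_split_nth[OF len j] V R_def N_def e_def by simp
  finally show ?thesis .
qed

text \<open>Replacing \<open>x\<^sub>j\<close> by \<open>-x\<^sub>j\<close> reflects the \<open>j\<close>-th coordinate \<open>c \<mapsto> 1 - c\<close>; this maps \<open>[0, 1)\<close>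
  onto \<open>(0, 1]\<close>, which for a generic \<open>t\<close> selects the same lattice points.\<close>

lemma cube_points_update_uminus:
  fixes S :: "(real^'n) list" and G :: "(real^'n) set"
  assumes S: "arr_basis (dual_lattice G) A S" and t: "t \<in> chamber_set (dual_lattice G) A"
    and j: "j < CARD('n)"
  shows "cube_points (dual_lattice G) (S[j := - S!j]) t = (\<lambda>y. y - S!j) ` cube_points (dual_lattice G) S t"
proof -
  let ?L = "dual_lattice G"
  let ?S' = "S[j := - S!j]"
  have gS: "basis_list S" and xL: "S!j \<in> ?L"
    using S j basis_list_length[of S] by (auto simp: arr_basis_def)
  have gS': "basis_list ?S'"
    using basis_list_update_scaleR[OF gS j, of "-1"] by simp
  have key: "y - S!j \<in> cube_points ?L ?S' t \<longleftrightarrow> y \<in> cube_points ?L S t" if y: "y \<in> ?L" for y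
  proof -
    have "(0 \<le> coord ?S' (y - S!j + t) k \<and> coord ?S' (y - S!j + t) k < 1) \<longleftrightarrow>
        (0 \<le> coord S (y + t) k \<and> coord S (y + t) k < 1)" if k: "k < CARD('n)" for k
    proof -
      have c1: "coord ?S' v k = (if k = j then - coord S v j else coord S v k)" for v
        using coord_update_scaleR[OF gS j _ k, of "-1" v] by simp
      have c2: "coord S (v - S!j) k = coord S v k - (if k = j then 1 else 0)" for v
        using coord_diff[OF gS k, of v "S!j"] coord_nth[OF gS k j] by simp
      have e: "y - S!j + t = (y + t) - S!j"
        by (simp add: algebra_simps)
      have "coord ?S' (y - S!j + t) k = (if k = j then 1 - coord S (y + t) j else coord S (y + t) k)"
        unfolding e using c1[of "(y + t) - S!j"] c2[of "y + t"] by (cases "k = j") simp_all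
      moreover have "coord S (y + t) j \<noteq> 0" "coord S (y + t) j \<noteq> 1"
        using coord_not_Ints_chamber[OF S t y j] by (metis Ints_0 Ints_1)+
      ultimately show ?thesis
        by auto
    qed
    then show ?thesis
      using y xL dual_lattice_diff[OF y xL]
      by (simp add: mem_cube_points_iff_coord[OF gS] mem_cube_points_iff_coord[OF gS'])
  qed
  show ?thesis
  proof (intro set_eqI iffI)
    fix w assume w: "w \<in> cube_points ?L ?S' t"
    then have "w + S!j \<in> ?L"
      using xL dual_lattice_add by (auto simp: cube_points_def)
    then have "w + S!j \<in> cube_points ?L S t"
      using key[of "w + S!j"] w by simp
    then show "w \<in> (\<lambda>y. y - S!j) ` cube_points ?L S t"
      by (rule rev_image_eqI) simp
  next
    fix w assume "w \<in> (\<lambda>y. y - S!j) ` cube_points ?L S t"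
    then obtain y where "y \<in> cube_points ?L S t" "w = y - S!j"
      by blast
    then show "w \<in> cube_points ?L ?S' t"
      using key by (simp add: cube_points_def)
  qed
qed

lemma mu_coef_update_uminus:
  fixes S :: "(real^'n) list" and G :: "(real^'n) set"
  assumes G: "full_lattice G" and S: "arr_basis (dual_lattice G) A S" and j: "j < CARD('n)"
    and t: "t \<in> chamber_set (dual_lattice G) A" and E: "exp (cpair (S!j) z) \<noteq> 1"
  shows "mu_coef (dual_lattice G) (S[j := - S!j]) t z = mu_coef (dual_lattice G) S t z"
proof -
  let ?L = "dual_lattice G"
  let ?S' = "S[j := - S!j]"
  let ?A = "cube_points ?L S t"
  have gS: "basis_list S" and SL: "set S \<subseteq> ?L"
    using S by (auto simp: arr_basis_def)
  have len: "length S = CARD('n)"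
    using basis_list_length[OF gS] .
  have "S!j \<in> ?L"
    using SL len j by auto
  then have S': "arr_basis ?L A ?S'"
    using arr_basis_update_scaleR[OF S j, of "-1"] dual_lattice_uminus[of "S!j" G] by simp
  have A': "cube_points ?L ?S' t = (\<lambda>y. y - S!j) ` ?A"
    by (rule cube_points_update_uminus[OF S t j])
  have inj: "inj_on (\<lambda>y. y - S!j) ?A"
    by (simp add: inj_on_def)
  define V where "V = card ?A"
  define N where "N = (\<Sum>y\<in>?A. exp (cpair y z))"
  define e where "e = exp (cpair (S!j) z)"
  define R where "R = (\<Prod>k\<in>{..<CARD('n)} - {j}. 1 / (1 - exp (cpair (S!k) z)))"
  have V: "lattice_index ?L S = V"
    unfolding V_def by (rule lattice_index_eq_card_cube_points[OF gS SL])
  have "lattice_index ?L ?S' = card (cube_points ?L ?S' t)"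
    using S' lattice_index_eq_card_cube_points[of ?S' G t] by (simp add: arr_basis_def)
  also have "\<dots> = V"
    unfolding A' card_image[OF inj] V_def ..
  finally have V': "lattice_index ?L ?S' = V" .
  have "(\<Sum>y\<in>cube_points ?L ?S' t. exp (cpair y z)) = (\<Sum>y\<in>?A. exp (cpair y z) / e)"
    unfolding A' sum.reindex[OF inj]
    by (rule sum.cong) (simp_all add: e_def cpair_diff exp_diff)
  also have "\<dots> = N / e"
    by (simp add: N_def sum_divide_distrib)
  finally have N': "(\<Sum>y\<in>cube_points ?L ?S' t. exp (cpair y z)) = N / e" .
  have einv: "exp (cpair (- S!j) z) = inverse e"
    using cpair_scaleR[of "-1" "S!j" z] by (simp add: e_def exp_minus)
  have "e \<noteq> 0" "e \<noteq> 1" "V > 0"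
    using E card_cube_points_pos[OF G gS SL] by (auto simp: e_def V_def)
  then have "mu_coef ?L ?S' t z = (1 / of_nat V) * complex_of_real (list_det S) * (1 / (1 - e)) * R * N"
    unfolding mu_coef_split_nth[OF length_list_update[THEN trans, OF len] j] V' N' R_def
    using list_det_update_scaleR[OF len j, of "-1"] len j by (simp add: einv field_simps)
  also have "\<dots> = mu_coef ?L S t z"
    unfolding mu_coef_split_nth[OF len j] V R_def N_def e_def by simp
  finally show ?thesis .
qed

lemma mu_coef_update_scaleR_of_int:
  fixes S :: "(real^'n) list" and G :: "(real^'n) set" and m :: int
  assumes G: "full_lattice G" and S: "arr_basis (dual_lattice G) A S" and j: "j < CARD('n)"
    and t: "t \<in> chamber_set (dual_lattice G) A" and m: "m \<noteq> 0"
    and E: "exp (cpair (S!j) z) \<noteq> 1" and Em: "exp (cpair (of_int m *\<^sub>R S!j) z) \<noteq> 1"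
  shows "mu_coef (dual_lattice G) (S[j := of_int m *\<^sub>R S!j]) t z = mu_coef (dual_lattice G) S t z"
proof -
  let ?L = "dual_lattice G"
  have gS: "basis_list S" and SL: "set S \<subseteq> ?L"
    using S by (auto simp: arr_basis_def)
  have len: "length S = CARD('n)"
    using basis_list_length[OF gS] .
  show ?thesis
  proof (cases "m > 0")
    case True
    then have "(of_int m :: real) = real (nat m)" "nat m > 0"
      by simp_all
    then show ?thesis
      using mu_coef_update_scaleR_of_nat[OF G gS SL j, of "nat m" z t] Em by simp
  next
    case False
    let ?S1 = "S[j := - S!j]"
    have "S!j \<in> ?L"
      using SL len j by auto
    then have S1: "arr_basis ?L A ?S1"
      using arr_basis_update_scaleR[OF S j, of "-1"] dual_lattice_uminus[of "S!j" G] by simp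
    have "real (nat (- m)) *\<^sub>R ?S1!j = of_int m *\<^sub>R S!j"
      using False len j by simp
    moreover have "nat (- m) > 0"
      using False m by simp
    ultimately have "mu_coef ?L (S[j := of_int m *\<^sub>R S!j]) t z = mu_coef ?L ?S1 t z"
      using mu_coef_update_scaleR_of_nat[of G ?S1 j "nat (- m)" z t] G S1 j Em
      by (simp add: arr_basis_def)
    also have "\<dots> = mu_coef ?L S t z"
      by (rule mu_coef_update_uminus[OF G S j t E])
    finally show ?thesis .
  qed
qed

lemma dual_lattice_parallel_ratio:
  fixes G :: "(real^'n) set"
  assumes G: "full_lattice G" and u: "u \<in> dual_lattice G" and v: "v \<in> dual_lattice G"
    and v0: "v \<noteq> 0" and r: "u = r *\<^sub>R v"
  obtains p q :: int where "q \<noteq> 0" "coprime q p" "r * of_int q = of_int p"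
proof -
  obtain b :: "'n \<Rightarrow> real^'n" where b: "\<And>y. (\<forall>k. y \<bullet> b k = 0) \<Longrightarrow> y = 0"
    "\<And>y. y \<in> dual_lattice G \<longleftrightarrow> (\<forall>k. y \<bullet> b k \<in> \<int>)"
    using full_lattice_obtains_basis[OF G] by metis
  obtain k where k: "v \<bullet> b k \<noteq> 0"
    using b(1) v0 by blast
  obtain a where a: "v \<bullet> b k = of_int a"
    using v b(2) by (metis Ints_cases)
  obtain c where c: "u \<bullet> b k = of_int c"
    using u b(2) by (metis Ints_cases)
  have a0: "a \<noteq> 0"
    using a k by simp
  define d where "d = gcd a c"
  define q where "q = a div d"
  define p where "p = c div d"
  have d0: "d \<noteq> 0"
    using a0 unfolding d_def by simp
  have aq: "a = q * d" and cp: "c = p * d"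
    unfolding q_def p_def d_def by simp_all
  have "q \<noteq> 0"
    using a0 aq by auto
  moreover have "coprime q p"
    unfolding q_def p_def d_def using div_gcd_coprime a0 by blast
  moreover have "r * of_int q = of_int p"
  proof -
    have "of_int c = r * of_int a"
      using c a r by (simp add: inner_scaleR_left)
    then show ?thesis
      using d0 unfolding aq cp by simp
  qed
  ultimately show ?thesis
    using that by blast
qed

lemma dual_lattice_parallel_common_divisor:
  fixes G :: "(real^'n) set"
  assumes G: "full_lattice G" and u: "u \<in> dual_lattice G" and v: "v \<in> dual_lattice G"
    and v0: "v \<noteq> 0" and r: "u = r *\<^sub>R v" and r0: "r \<noteq> 0"
  obtains x0 and p q :: int
  where "x0 \<in> dual_lattice G" "p \<noteq> 0" "q \<noteq> 0" "v = of_int q *\<^sub>R x0" "u = of_int p *\<^sub>R x0"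
proof -
  obtain p q :: int where q0: "q \<noteq> 0" and coprime: "coprime q p" and rqp: "r * of_int q = of_int p"
    using dual_lattice_parallel_ratio[OF G u v v0 r] .
  obtain b :: "'n \<Rightarrow> real^'n" where b: "\<And>y. y \<in> dual_lattice G \<longleftrightarrow> (\<forall>k. y \<bullet> b k \<in> \<int>)"
    using full_lattice_obtains_basis[OF G] by metis
  define x0 where "x0 = (1 / of_int q) *\<^sub>R v"
  have "x0 \<in> dual_lattice G"
    unfolding b
  proof
    fix k
    obtain A where A: "v \<bullet> b k = of_int A"
      using v b by (metis Ints_cases)
    obtain B where B: "u \<bullet> b k = of_int B"
      using u b by (metis Ints_cases)
    have "of_int B = r * of_int A"
      using A B r by (simp add: inner_scaleR_left)
    then have "of_int (q * B) = (of_int (p * A) :: real)"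
      using rqp by (simp add: algebra_simps)
    then have "q dvd p * A"
      by (metis dvd_triv_left of_int_eq_iff)
    then obtain A' where "A = q * A'"
      using coprime by (metis coprime_dvd_mult_right_iff dvdE)
    then have "x0 \<bullet> b k = of_int A'"
      unfolding x0_def using A q0 by (simp add: inner_scaleR_left)
    then show "x0 \<bullet> b k \<in> \<int>"
      by simp
  qed
  moreover have "p \<noteq> 0"
    using rqp r0 q0 by auto
  moreover have "v = of_int q *\<^sub>R x0" "u = of_int p *\<^sub>R x0"
    unfolding x0_def r using q0 rqp[symmetric] by (simp_all add: field_simps)
  ultimately show ?thesis
    using that q0 by blast
qed

text \<open>A parallel form from the lattice is a rational multiple: write both as integer multiples of
  a common lattice vector \<open>x\<^sub>0\<close> and compare each with \<open>x\<^sub>0\<close>. A common divisor rather than a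
  common multiple is used because \<open>exp x\<^sub>0 \<noteq> 1\<close> is inherited from \<open>exp (q x\<^sub>0) \<noteq> 1\<close>.\<close>

lemma mu_coef_update_parallel:
  fixes S :: "(real^'n) list" and G :: "(real^'n) set"
  assumes G: "full_lattice G" and S: "arr_basis (dual_lattice G) A S" and j: "j < CARD('n)"
    and t: "t \<in> chamber_set (dual_lattice G) A"
    and u: "u \<in> dual_lattice G" and r: "u = r *\<^sub>R S!j" and r0: "r \<noteq> 0"
    and E: "exp (cpair (S!j) z) \<noteq> 1" and Eu: "exp (cpair u z) \<noteq> 1"
  shows "mu_coef (dual_lattice G) (S[j := u]) t z = mu_coef (dual_lattice G) S t z"
proof -
  let ?L = "dual_lattice G"
  have gS: "basis_list S" and SL: "set S \<subseteq> ?L"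
    using S by (auto simp: arr_basis_def)
  have len: "length S = CARD('n)"
    using basis_list_length[OF gS] .
  have xL: "S!j \<in> ?L"
    using SL len j by auto
  obtain x0 and p q :: int where x0: "x0 \<in> ?L" and p0: "p \<noteq> 0" and q0: "q \<noteq> 0"
    and xq: "S!j = of_int q *\<^sub>R x0" and up: "u = of_int p *\<^sub>R x0"
    using dual_lattice_parallel_common_divisor[OF G u xL basis_list_nth_nonzero[OF gS j] r r0] .
  let ?S0 = "S[j := x0]"
  have x0_eq: "(1 / of_int q) *\<^sub>R S!j = x0"
    using q0 by (simp add: xq)
  have S0: "arr_basis ?L A ?S0"
    using arr_basis_update_scaleR[OF S j, of "1 / of_int q"] q0 x0 unfolding x0_eq by simp
  have S0j: "?S0 ! j = x0"
    using len j by simp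
  have "exp (cpair x0 z) \<noteq> 1"
  proof
    assume "exp (cpair x0 z) = 1"
    then have "exp (of_int q * cpair x0 z) = 1"
      using exp_power_int[of "cpair x0 z" q] by simp
    then show False
      using E by (simp add: xq cpair_scaleR)
  qed
  then have "mu_coef ?L (?S0[j := of_int p *\<^sub>R ?S0!j]) t z = mu_coef ?L ?S0 t z"
    and "mu_coef ?L (?S0[j := of_int q *\<^sub>R ?S0!j]) t z = mu_coef ?L ?S0 t z"
    using mu_coef_update_scaleR_of_int[OF G S0 j t] p0 q0 E Eu unfolding S0j xq up by simp_all
  moreover have "?S0[j := of_int q *\<^sub>R ?S0!j] = S" "?S0[j := of_int p *\<^sub>R ?S0!j] = S[j := u]"
    unfolding S0j xq[symmetric] up[symmetric] by simp_all
  ultimately show ?thesis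
    by simp
qed

lemma mu_coef_rescale:
  fixes S S' :: "(real^'n) list" and G :: "(real^'n) set"
  assumes G: "full_lattice G" and S: "arr_basis (dual_lattice G) A S" and S': "arr_basis (dual_lattice G) A S'"
    and t: "t \<in> chamber_set (dual_lattice G) A"
    and par: "\<And>k. k < CARD('n) \<Longrightarrow> \<exists>r. r \<noteq> 0 \<and> S'!k = r *\<^sub>R S!k"
    and ES: "\<And>k. k < CARD('n) \<Longrightarrow> exp (cpair (S!k) z) \<noteq> 1"
    and ES': "\<And>k. k < CARD('n) \<Longrightarrow> exp (cpair (S'!k) z) \<noteq> 1"
  shows "mu_coef (dual_lattice G) S' t z = mu_coef (dual_lattice G) S t z"
proof -
  let ?L = "dual_lattice G"
  have len: "length S = CARD('n)" and len': "length S' = CARD('n)" and S'L: "set S' \<subseteq> ?L"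
    using S S' by (auto simp: arr_basis_def basis_list_def)
  define T where "T m = take m S' @ drop m S" for m
  have T_nth: "T m ! k = (if k < m then S'!k else S!k)" if "m \<le> CARD('n)" "k < CARD('n)" for m k
    unfolding T_def using len len' that by (auto simp: nth_append min_def)
  have T_Suc: "T (Suc m) = (T m)[m := S'!m]" if "m < CARD('n)" for m
    using that len len' by (intro nth_equalityI) (auto simp: T_def nth_append nth_list_update min_def)
  have "arr_basis ?L A (T m) \<and> mu_coef ?L (T m) t z = mu_coef ?L S t z" if "m \<le> CARD('n)" for m
    using that
  proof (induction m)
    case 0
    then show ?case
      using S by (simp add: T_def)
  next
    case (Suc m)
    then have m: "m < CARD('n)" and IH: "arr_basis ?L A (T m)" "mu_coef ?L (T m) t z = mu_coef ?L S t z"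
      by auto
    obtain r where r: "r \<noteq> 0" "S'!m = r *\<^sub>R S!m"
      using par[OF m] by blast
    have Tm: "T m ! m = S!m"
      using T_nth[of m m] m by simp
    have u: "S'!m \<in> ?L"
      using S'L len' m by auto
    have "mu_coef ?L ((T m)[m := S'!m]) t z = mu_coef ?L (T m) t z"
      using mu_coef_update_parallel[OF G IH(1) m t u _ r(1)] ES[OF m] ES'[OF m] r(2) by (simp add: Tm)
    moreover have "arr_basis ?L A ((T m)[m := S'!m])"
      using arr_basis_update_scaleR[OF IH(1) m r(1)] u r(2) by (simp add: Tm)
    ultimately show ?case
      using IH(2) T_Suc[OF m] by simp
  qed
  moreover have "T (CARD('n)) = S'"
    unfolding T_def using len len' by simp
  ultimately show ?thesis
    by (metis order_refl)
qed

lemma mu_coef_well_defined: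
  fixes S S' :: "(real^'n) list" and G :: "(real^'n) set"
  assumes G: "full_lattice G" and S: "arr_basis (dual_lattice G) A S" and S': "arr_basis (dual_lattice G) A S'"
    and D: "D \<in> components (chamber_set (dual_lattice G) A)" and t: "t \<in> D" "t' \<in> D"
    and par: "\<And>k. k < CARD('n) \<Longrightarrow> \<exists>r. r \<noteq> 0 \<and> S'!k = r *\<^sub>R S!k"
    and ES: "\<And>k. k < CARD('n) \<Longrightarrow> exp (cpair (S!k) z) \<noteq> 1"
    and ES': "\<And>k. k < CARD('n) \<Longrightarrow> exp (cpair (S'!k) z) \<noteq> 1"
  shows "mu_coef (dual_lattice G) S' t' z = mu_coef (dual_lattice G) S t z"
proof -
  have "t' \<in> chamber_set (dual_lattice G) A"
    using in_components_subset[OF D] t by blast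
  then have "mu_coef (dual_lattice G) S' t' z = mu_coef (dual_lattice G) S t' z"
    by (rule mu_coef_rescale[OF G S S' _ par ES ES'])
  also have "\<dots> = mu_coef (dual_lattice G) S t z"
    using cube_points_chamber_invariant[OF S D t] by (simp add: mu_coef_def cube_points_def)
  finally show ?thesis .
qed

section \<open>Omitting one vector of a minimal relation\<close>

text \<open>For \<open>m \<le> n\<close>, \<open>skip m\<close> enumerates \<open>{0..n} - {m}\<close> in increasing order, and \<open>omit_list x m\<close>
  is the list \<open>x\<^sub>0, \<dots>, x\<^sub>n\<close> with \<open>x\<^sub>m\<close> removed (here \<open>n = CARD('n)\<close>); indices are shifted by one
  against the paper, so \<open>omit_list x m\<close> corresponds to \<open>C[m+1]\<close>.\<close>

definition skip :: "nat \<Rightarrow> nat \<Rightarrow> nat" where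
  "skip m j = (if j < m then j else Suc j)"

definition omit_list :: "(nat \<Rightarrow> real^'n) \<Rightarrow> nat \<Rightarrow> (real^'n) list" where
  "omit_list x m = map (\<lambda>j. x (skip m j)) [0..<CARD('n)]"

lemma length_omit_list [simp]: "length (omit_list (x :: nat \<Rightarrow> real^'n) m) = CARD('n)"
  by (simp add: omit_list_def)

lemma nth_omit_list: "j < CARD('n) \<Longrightarrow> omit_list (x :: nat \<Rightarrow> real^'n) m ! j = x (skip m j)"
  by (simp add: omit_list_def)

lemma nth_omit_list_last: "k < CARD('n) \<Longrightarrow> omit_list (x :: nat \<Rightarrow> real^'n) (CARD('n)) ! k = x k"
  by (simp add: nth_omit_list skip_def)

lemma skip_le: "m \<le> n \<Longrightarrow> j < n \<Longrightarrow> skip m j \<le> n"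
  by (simp add: skip_def)

lemma skip_neq: "skip m j \<noteq> m"
  by (simp add: skip_def)

lemma inj_on_skip: "inj_on (skip m) A"
  by (auto simp: inj_on_def skip_def split: if_splits)

lemma skip_image: "m \<le> n \<Longrightarrow> skip m ` {..<n} = {..n} - {m}"
proof (intro set_eqI iffI)
  fix k assume mn: "m \<le> n" and k: "k \<in> {..n} - {m}"
  show "k \<in> skip m ` {..<n}"
  proof (cases "k < m")
    case True
    then show ?thesis
      using mn by (intro image_eqI[of _ _ k]) (auto simp: skip_def)
  next
    case False
    then show ?thesis
      using k by (intro image_eqI[of _ _ "k - 1"]) (auto simp: skip_def)
  qed
qed (auto simp: skip_def)

lemma skip_surj: "m \<le> n \<Longrightarrow> k \<le> n \<Longrightarrow> k \<noteq> m \<Longrightarrow> \<exists>j<n. skip m j = k"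
  using skip_image[of m n] by (metis Diff_iff atMost_iff imageE lessThan_iff singletonD)

lemma sum_skip: "m \<le> n \<Longrightarrow> (\<Sum>j<n. g (skip m j)) = (\<Sum>k\<in>{..n} - {m}. g k)"
  using sum.reindex[OF inj_on_skip[of m "{..<n}"], of g] skip_image[of m n] by simp

lemma prod_skip: "m \<le> n \<Longrightarrow> (\<Prod>j<n. g (skip m j)) = (\<Prod>k\<in>{..n} - {m}. g k)"
  using prod.reindex[OF inj_on_skip[of m "{..<n}"], of g] skip_image[of m n] by simp

lemma list_det_eq_0_if_nth_eq:
  fixes L :: "(real^'n::finite) list"
  assumes len: "length L = CARD('n)" and pq: "p < CARD('n)" "q < CARD('n)" "p \<noteq> q" and eq: "L!p = L!q"
  shows "list_det L = 0"
proof -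
  obtain rp rq :: 'n where rp: "idx rp = p" and rq: "idx rq = q"
    using idx_surj pq by metis
  then have "rp \<noteq> rq" and "row rp (\<chi> r. L ! idx r) = row rq (\<chi> r. L ! idx r)"
    using pq eq by (auto simp: row_def)
  then show ?thesis
    unfolding list_det_def by (rule det_identical_rows)
qed

text \<open>Cramer's rule: expand \<open>\<Sum> a\<^sub>k x\<^sub>k = 0\<close> in the \<open>m\<close>-th slot of
  \<open>omit_list x m\<close>; all terms but \<open>k = m, m + 1\<close> have a repeated row.\<close>

lemma list_det_omit_list_Suc:
  fixes x :: "nat \<Rightarrow> real^'n" and a :: "nat \<Rightarrow> real"
  assumes rel: "(\<Sum>k\<le>CARD('n). a k *\<^sub>R x k) = 0" and m: "m < CARD('n)"
  shows "a (Suc m) * list_det (omit_list x m) + a m * list_det (omit_list x (Suc m)) = 0"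
proof -
  let ?n = "CARD('n)"
  let ?L = "omit_list x m"
  obtain r0 :: 'n where r0: "idx r0 = m"
    using idx_surj[OF m] by blast
  have upd: "list_det (?L[m := v]) = det (\<chi> r. if r = r0 then v else ?L ! idx r)" for v
    by (rule list_det_list_update) (simp_all add: r0)
  have "0 = list_det (?L[m := (\<Sum>k\<le>?n. a k *\<^sub>R x k)])"
    unfolding rel upd by (simp add: det_row_0)
  also have "\<dots> = (\<Sum>k\<le>?n. a k * list_det (?L[m := x k]))"
    unfolding upd scalar_mult_eq_scaleR[symmetric] det_linear_row_sum[OF finite_atMost]
    by (simp add: det_row_mul)
  also have "\<dots> = (\<Sum>k\<in>{m, Suc m}. a k * list_det (?L[m := x k]))"
  proof (rule sum.mono_neutral_right)
    show "\<forall>k\<in>{..?n} - {m, Suc m}. a k * list_det (?L[m := x k]) = 0"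
    proof
      fix k assume k: "k \<in> {..?n} - {m, Suc m}"
      define p where "p = (if k < m then k else k - 1)"
      have p: "p < ?n" "p \<noteq> m" "skip m p = k"
        using k m unfolding p_def skip_def by auto
      then have "list_det (?L[m := x k]) = 0"
        using m by (intro list_det_eq_0_if_nth_eq[of _ p m]) (simp_all add: nth_omit_list)
      then show "a k * list_det (?L[m := x k]) = 0"
        by simp
    qed
  qed (use m in auto)
  also have "\<dots> = a m * list_det (?L[m := x m]) + a (Suc m) * list_det (?L[m := x (Suc m)])"
    by simp
  also have "?L[m := x (Suc m)] = ?L"
    by (rule nth_equalityI) (auto simp: nth_omit_list nth_list_update skip_def)
  also have "?L[m := x m] = omit_list x (Suc m)"
  proof (rule nth_equalityI)
    fix i assume "i < length (?L[m := x m])"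
    then show "?L[m := x m] ! i = omit_list x (Suc m) ! i"
      by (cases "i = m") (simp_all add: nth_omit_list skip_def)
  qed simp
  finally show ?thesis
    by simp
qed

lemma list_det_omit_list:
  fixes x :: "nat \<Rightarrow> real^'n" and a :: "nat \<Rightarrow> real"
  assumes rel: "(\<Sum>k\<le>CARD('n). a k *\<^sub>R x k) = 0" and a0: "\<And>k. k \<le> CARD('n) \<Longrightarrow> a k \<noteq> 0"
    and m: "m \<le> CARD('n)"
  shows "(-1) ^ m * list_det (omit_list x m) = (list_det (omit_list x 0) / a 0) * a m"
  using m
proof (induction m)
  case 0
  then show ?case
    using a0[of 0] by simp
next
  case (Suc m)
  then have m: "m < CARD('n)" and am: "a m \<noteq> 0"
    using a0 by auto
  have "list_det (omit_list x (Suc m)) = - a (Suc m) * list_det (omit_list x m) / a m"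
    using list_det_omit_list_Suc[OF rel m] am by (simp add: field_simps add_eq_0_iff)
  then have "(-1) ^ Suc m * list_det (omit_list x (Suc m)) = a (Suc m) * ((-1) ^ m * list_det (omit_list x m)) / a m"
    by simp
  also have "\<dots> = (list_det (omit_list x 0) / a 0) * a (Suc m)"
    using Suc am by simp
  finally show ?case .
qed

lemma omit_list_relation_unique:
  fixes x :: "nat \<Rightarrow> real^'n"
  assumes basis: "basis_list (omit_list x (CARD('n)))"
    and rel: "(\<Sum>k\<le>CARD('n). a k *\<^sub>R x k) = 0" and an: "a (CARD('n)) \<noteq> 0"
    and rel': "(\<Sum>k\<le>CARD('n). b k *\<^sub>R x k) = 0" and k: "k \<le> CARD('n)"
  shows "b k = (b (CARD('n)) / a (CARD('n))) * a k"
proof -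
  let ?n = "CARD('n)"
  define c where "c k = b k - (b ?n / a ?n) * a k" for k
  have "(\<Sum>k\<le>?n. c k *\<^sub>R x k) = (\<Sum>k\<le>?n. b k *\<^sub>R x k) - (b ?n / a ?n) *\<^sub>R (\<Sum>k\<le>?n. a k *\<^sub>R x k)"
    by (simp add: c_def scaleR_diff_left sum_subtractf scaleR_sum_right)
  moreover have "c ?n = 0"
    using an by (simp add: c_def)
  ultimately have "(\<Sum>k<?n. c k *\<^sub>R omit_list x ?n ! k) = 0"
    using rel rel' by (simp add: lessThan_Suc_atMost[symmetric] nth_omit_list_last)
  then have "\<forall>j<?n. c j = 0"
    using basis_list_lincomb_eq_0[OF basis] by blast
  then have "c k = 0"
    using k \<open>c ?n = 0\<close> by (cases "k = ?n") auto
  then show ?thesis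
    by (simp add: c_def)
qed

section \<open>Signed cancellation of lattice points along a line\<close>

lemma sum_lower_endpoints_in_Inter_intervals:
  fixes lo hi :: "'i \<Rightarrow> real"
  assumes fin: "finite K" and inj: "inj_on lo K"
  shows "(\<Sum>k\<in>K. if \<forall>j\<in>K. lo j \<le> lo k \<and> lo k \<le> hi j then 1 else 0 :: real) =
    (if K \<noteq> {} \<and> (\<exists>s. \<forall>j\<in>K. lo j \<le> s \<and> s \<le> hi j) then 1 else 0)"
proof (cases "\<exists>k\<in>K. \<forall>j\<in>K. lo j \<le> lo k \<and> lo k \<le> hi j")
  case True
  then obtain k0 where k0: "k0 \<in> K" "\<forall>j\<in>K. lo j \<le> lo k0 \<and> lo k0 \<le> hi j"
    by blast
  have "k = k0" if "k \<in> K" "\<forall>j\<in>K. lo j \<le> lo k \<and> lo k \<le> hi j" for k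
    using that k0 inj by (intro inj_onD[OF inj]) (auto intro: order.antisym)
  then have "{k\<in>K. \<forall>j\<in>K. lo j \<le> lo k \<and> lo k \<le> hi j} = {k0}"
    using k0 by blast
  moreover have "(\<Sum>k\<in>K. if \<forall>j\<in>K. lo j \<le> lo k \<and> lo k \<le> hi j then 1 else 0 :: real) =
      (\<Sum>k\<in>{k\<in>K. \<forall>j\<in>K. lo j \<le> lo k \<and> lo k \<le> hi j}. 1)"
    by (rule sum.inter_filter[symmetric, OF fin])
  ultimately show ?thesis
    using k0 by auto
next
  case False
  have "\<not> (K \<noteq> {} \<and> (\<exists>s. \<forall>j\<in>K. lo j \<le> s \<and> s \<le> hi j))"
  proof
    assume "K \<noteq> {} \<and> (\<exists>s. \<forall>j\<in>K. lo j \<le> s \<and> s \<le> hi j)"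
    then obtain s where K: "K \<noteq> {}" and s: "\<forall>j\<in>K. lo j \<le> s \<and> s \<le> hi j"
      by blast
    have "Max (lo ` K) \<in> lo ` K"
      using fin K by simp
    then obtain k where k: "k \<in> K" "lo k = Max (lo ` K)"
      by auto
    then have "\<forall>j\<in>K. lo j \<le> lo k \<and> lo k \<le> hi j"
      using s fin by (metis Max_ge finite_imageI image_eqI order.trans)
    then show False
      using False k(1) by blast
  qed
  then show ?thesis
    using False by (simp add: sum.neutral)
qed

text \<open>The intersection of finitely many closed intervals is either empty or an interval whose
  lower and upper ends are each the end of exactly one of them, provided the ends are distinct.\<close>

lemma sum_endpoints_in_Inter_intervals:
  fixes lo hi :: "'i \<Rightarrow> real"
  assumes fin: "finite K" and inj: "inj_on lo K" "inj_on hi K"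
  defines "In \<equiv> \<lambda>s. \<forall>j\<in>K. lo j \<le> s \<and> s \<le> hi j"
  shows "(\<Sum>k\<in>K. (if In (lo k) then 1 else 0) - (if In (hi k) then 1 else 0) :: real) = 0"
proof -
  have "(\<exists>s. \<forall>j\<in>K. - hi j \<le> s \<and> s \<le> - lo j) \<longleftrightarrow> (\<exists>s. In s)"
    unfolding In_def by (metis minus_le_iff le_minus_iff neg_le_iff_le)
  moreover have "inj_on (\<lambda>k. - hi k) K"
    using inj(2) by (simp add: inj_on_def)
  ultimately have "(\<Sum>k\<in>K. if In (hi k) then 1 else 0 :: real) = (if K \<noteq> {} \<and> (\<exists>s. In s) then 1 else 0)"
    using sum_lower_endpoints_in_Inter_intervals[OF fin, of "\<lambda>k. - hi k" "\<lambda>k. - lo k"]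
    unfolding In_def by (simp add: conj_commute)
  moreover have "(\<Sum>k\<in>K. if In (lo k) then 1 else 0 :: real) = (if K \<noteq> {} \<and> (\<exists>s. In s) then 1 else 0)"
    using sum_lower_endpoints_in_Inter_intervals[OF fin inj(1), of hi] unfolding In_def .
  ultimately show ?thesis
    by (simp add: sum_subtractf)
qed

text \<open>Along the line \<open>s \<mapsto> c\<^sub>0 + s a\<close>, the parameters \<open>s\<^sub>0 k\<close> and \<open>s\<^sub>1 k\<close> are where the \<open>k\<close>-th
  coordinate equals \<open>0\<close> and \<open>1\<close>; they are the ends of the \<open>k\<close>-th slab of the unit box, in the order
  given by the sign of \<open>a k\<close>.\<close>

lemma sum_sgn_box_crossings_eq_0:
  fixes K :: "'i set" and a c0 :: "'i \<Rightarrow> real"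
  defines "s0 \<equiv> \<lambda>k. - c0 k / a k"
  defines "s1 \<equiv> \<lambda>k. (1 - c0 k) / a k"
  defines "In \<equiv> \<lambda>s. \<forall>j\<in>K. 0 \<le> c0 j + s * a j \<and> c0 j + s * a j \<le> 1"
  assumes fin: "finite K" and a0: "\<And>k. k \<in> K \<Longrightarrow> a k \<noteq> 0"
    and gen0: "\<And>k j. k \<in> K \<Longrightarrow> j \<in> K \<Longrightarrow> j \<noteq> k \<Longrightarrow> c0 j + s0 k * a j \<notin> \<int>"
    and gen1: "\<And>k j. k \<in> K \<Longrightarrow> j \<in> K \<Longrightarrow> j \<noteq> k \<Longrightarrow> c0 j + s1 k * a j \<notin> \<int>"
  shows "(\<Sum>k\<in>K. sgn (a k) * ((if In (s0 k) then 1 else 0) - (if In (s1 k) then 1 else 0))) = 0"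
proof -
  define lo where "lo k = min (s0 k) (s1 k)" for k
  define hi where "hi k = max (s0 k) (s1 k)" for k
  have order: "if a k > 0 then lo k = s0 k \<and> hi k = s1 k else lo k = s1 k \<and> hi k = s0 k"
    if "k \<in> K" for k
    using a0[OF that] by (auto simp: lo_def hi_def s0_def s1_def divide_simps)
  have slab: "(0 \<le> c0 k + s * a k \<and> c0 k + s * a k \<le> 1) \<longleftrightarrow> (lo k \<le> s \<and> s \<le> hi k)"
    if "k \<in> K" for k s
  proof (cases "a k > 0")
    case True
    have "lo k = s0 k" "hi k = s1 k"
      using order[OF that] True by simp_all
    then show ?thesis
      using True by (simp only:) (auto simp: s0_def s1_def field_simps)
  next
    case False
    then have "a k < 0"
      using a0[OF that] by simp
    moreover have "lo k = s1 k" "hi k = s0 k"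
      using order[OF that] False by simp_all
    ultimately show ?thesis
      by (simp only:) (auto simp: s0_def s1_def field_simps)
  qed
  have In: "In s \<longleftrightarrow> (\<forall>j\<in>K. lo j \<le> s \<and> s \<le> hi j)" for s
    unfolding In_def using slab by blast
  have end_Ints: "c0 k + lo k * a k \<in> \<int>" "c0 k + hi k * a k \<in> \<int>" if "k \<in> K" for k
    using order[OF that] a0[OF that] by (auto simp: s0_def s1_def split: if_splits)
  have end_gen: "c0 j + lo k * a j \<notin> \<int>" "c0 j + hi k * a j \<notin> \<int>"
    if "k \<in> K" "j \<in> K" "j \<noteq> k" for k j
    using order[OF that(1)] gen0[OF that] gen1[OF that] by (auto split: if_splits)
  have "inj_on lo K" "inj_on hi K"
    using end_Ints end_gen by (metis inj_onI)+
  moreover have "sgn (a k) * ((if In (s0 k) then 1 else 0) - (if In (s1 k) then 1 else 0)) =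
      (if In (lo k) then 1 else 0) - (if In (hi k) then 1 else 0)" if "k \<in> K" for k
    using order[OF that] a0[OF that] by (auto split: if_splits)
  ultimately show ?thesis
    using sum_endpoints_in_Inter_intervals[OF fin, of lo hi] unfolding In[abs_def]
    by (simp cong: sum.cong)
qed

lemma sum_translate_differences_eq_0:
  fixes A :: "'i \<Rightarrow> 'a::ab_group_add set" and x :: "'i \<Rightarrow> 'a" and c :: "'i \<Rightarrow> real"
    and g :: "'a \<Rightarrow> 'b::real_vector"
  assumes fin: "finite I" "\<And>m. m \<in> I \<Longrightarrow> finite (A m)"
    and pointwise: "\<And>y. (\<Sum>m\<in>I. c m * ((if y \<in> A m then 1 else 0) - (if y - x m \<in> A m then 1 else 0))) = 0"
  shows "(\<Sum>m\<in>I. c m *\<^sub>R ((\<Sum>y\<in>A m. g y) - (\<Sum>y\<in>A m. g (y + x m)))) = 0"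
proof -
  define U where "U = (\<Union>m\<in>I. A m \<union> (\<lambda>y. y + x m) ` A m)"
  define ind where "ind m y = (if y \<in> A m then 1 else 0) - (if y - x m \<in> A m then 1 else (0 :: real))" for m y
  have finU: "finite U"
    unfolding U_def using fin by auto
  have "(\<Sum>y\<in>A m. g y) - (\<Sum>y\<in>A m. g (y + x m)) = (\<Sum>y\<in>U. ind m y *\<^sub>R g y)" if m: "m \<in> I" for m
  proof -
    have "U \<inter> A m = A m"
      using m by (auto simp: U_def)
    then have "(\<Sum>y\<in>A m. g y) = (\<Sum>y\<in>U. if y \<in> A m then g y else 0)"
      using sum.inter_restrict[OF finU, of g "A m"] by simp
    moreover have "(\<Sum>y\<in>A m. g (y + x m)) = (\<Sum>y\<in>(\<lambda>y. y + x m) ` A m. g y)"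
      by (simp add: sum.reindex inj_on_def)
    moreover have "(\<lambda>y. y + x m) ` A m = U \<inter> {y. y - x m \<in> A m}"
    proof (intro set_eqI iffI)
      fix y assume "y \<in> U \<inter> {y. y - x m \<in> A m}"
      then have "y - x m \<in> A m"
        by blast
      then show "y \<in> (\<lambda>y. y + x m) ` A m"
        by (rule rev_image_eqI) simp
    qed (use m in \<open>auto simp: U_def\<close>)
    ultimately have "(\<Sum>y\<in>A m. g y) - (\<Sum>y\<in>A m. g (y + x m)) =
        (\<Sum>y\<in>U. (if y \<in> A m then g y else 0) - (if y - x m \<in> A m then g y else 0))"
      using sum.inter_restrict[OF finU, of g "{y. y - x m \<in> A m}"] by (simp add: sum_subtractf)
    also have "\<dots> = (\<Sum>y\<in>U. ind m y *\<^sub>R g y)"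
      by (rule sum.cong) (auto simp: ind_def scaleR_diff_left)
    finally show ?thesis .
  qed
  then have "(\<Sum>m\<in>I. c m *\<^sub>R ((\<Sum>y\<in>A m. g y) - (\<Sum>y\<in>A m. g (y + x m)))) =
      (\<Sum>y\<in>U. (\<Sum>m\<in>I. c m * ind m y) *\<^sub>R g y)"
    by (simp add: scaleR_sum_right scaleR_sum_left sum.swap[of _ U])
  also have "\<dots> = 0"
    using pointwise by (simp add: ind_def)
  finally show ?thesis .
qed

context
  fixes G :: "(real^'n) set" and A :: "(real^'n) set set" and x :: "nat \<Rightarrow> real^'n"
    and a :: "nat \<Rightarrow> real" and t0 :: "real^'n"
  assumes G: "full_lattice G"
    and bases: "\<And>m. m \<le> CARD('n) \<Longrightarrow> arr_basis (dual_lattice G) A (omit_list x m)"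
    and t0: "t0 \<in> chamber_set (dual_lattice G) A"
    and xL: "\<And>k. k \<le> CARD('n) \<Longrightarrow> x k \<in> dual_lattice G"
    and rel: "(\<Sum>k\<le>CARD('n). a k *\<^sub>R x k) = 0"
    and a0: "\<And>k. k \<le> CARD('n) \<Longrightarrow> a k \<noteq> 0"
begin

lemma basis_list_omit_list: "m \<le> CARD('n) \<Longrightarrow> basis_list (omit_list x m)"
  using bases by (simp add: arr_basis_def)

lemma coord_omit_list:
  assumes m: "m \<le> CARD('n)" and d: "(\<Sum>k\<le>CARD('n). d k *\<^sub>R x k) = v + d m *\<^sub>R x m" and j: "j < CARD('n)"
  shows "coord (omit_list x m) v j = d (skip m j)"
proof (rule coord_unique[OF basis_list_omit_list[OF m] _ j])
  have "(\<Sum>j<CARD('n). d (skip m j) *\<^sub>R omit_list x m ! j) = (\<Sum>k\<in>{..CARD('n)} - {m}. d k *\<^sub>R x k)"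
    using sum_skip[OF m, of "\<lambda>k. d k *\<^sub>R x k"] by (simp add: nth_omit_list)
  also have "\<dots> = v"
    using d m by (simp add: sum_diff1)
  finally show "(\<Sum>j<CARD('n). d (skip m j) *\<^sub>R omit_list x m ! j) = v" .
qed

lemma coeff_not_Ints:
  assumes m: "m \<le> CARD('n)" and v: "v \<in> dual_lattice G"
    and d: "(\<Sum>k\<le>CARD('n). d k *\<^sub>R x k) = v + t0 + d m *\<^sub>R x m"
    and k: "k \<le> CARD('n)" "k \<noteq> m"
  shows "d k \<notin> \<int>"
proof -
  obtain j where j: "j < CARD('n)" "skip m j = k"
    using skip_surj[OF m k] by blast
  then show ?thesis
    using coord_not_Ints_chamber[OF bases[OF m] t0 v j(1)] coord_omit_list[OF m d j(1)] by simp
qed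

lemma mem_cube_points_omit_list_iff:
  assumes m: "m \<le> CARD('n)" and v: "v \<in> dual_lattice G"
    and d: "(\<Sum>k\<le>CARD('n). d k *\<^sub>R x k) = v + t0 + d m *\<^sub>R x m" and dm: "d m = 0 \<or> d m = 1"
  shows "v \<in> cube_points (dual_lattice G) (omit_list x m) t0 \<longleftrightarrow> (\<forall>k\<le>CARD('n). 0 \<le> d k \<and> d k \<le> 1)"
proof -
  have "v \<in> cube_points (dual_lattice G) (omit_list x m) t0 \<longleftrightarrow> (\<forall>j<CARD('n). 0 \<le> d (skip m j) \<and> d (skip m j) < 1)"
    using v coord_omit_list[OF m _] d
    by (simp add: mem_cube_points_iff_coord[OF basis_list_omit_list[OF m]] add.assoc)
  also have "\<dots> \<longleftrightarrow> (\<forall>k\<in>{..CARD('n)} - {m}. 0 \<le> d k \<and> d k < 1)"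
    unfolding skip_image[OF m, symmetric] by auto
  also have "\<dots> \<longleftrightarrow> (\<forall>k\<in>{..CARD('n)} - {m}. 0 \<le> d k \<and> d k \<le> 1)"
    using coeff_not_Ints[OF m v d] by (force simp: order_le_less)
  also have "\<dots> \<longleftrightarrow> (\<forall>k\<le>CARD('n). 0 \<le> d k \<and> d k \<le> 1)"
    using dm m by auto
  finally show ?thesis .
qed

text \<open>Write \<open>y + t\<^sub>0 = \<Sum> c\<^sub>k x\<^sub>k\<close>; along the line \<open>c + s a\<close> of all such representations, \<open>y\<close> lies in
  the \<open>m\<close>-th cell exactly when the line meets the unit box where its \<open>m\<close>-th entry is \<open>0\<close>, and
  \<open>y - x\<^sub>m\<close> does exactly when it meets the box where that entry is \<open>1\<close>.\<close>

lemma sum_sgn_cube_points_indicator_eq_0: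
  "(\<Sum>m\<le>CARD('n). sgn (a m) * ((if y \<in> cube_points (dual_lattice G) (omit_list x m) t0 then 1 else 0)
      - (if y - x m \<in> cube_points (dual_lattice G) (omit_list x m) t0 then 1 else 0))) = 0"
proof (cases "y \<in> dual_lattice G")
  case False
  then have "y \<notin> cube_points (dual_lattice G) (omit_list x m) t0"
    "y - x m \<notin> cube_points (dual_lattice G) (omit_list x m) t0" if "m \<le> CARD('n)" for m
    using dual_lattice_add[of "y - x m" G "x m"] xL[OF that] by (auto simp: cube_points_def)
  then show ?thesis
    by simp
next
  case y: True
  let ?n = "CARD('n)"
  let ?b = "omit_list x ?n"
  define c0 where "c0 k = (if k < ?n then coord ?b (y + t0) k else 0)" for k
  define s0 where "s0 k = - c0 k / a k" for k
  define s1 where "s1 k = (1 - c0 k) / a k" for k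
  define In where "In s = (\<forall>j\<in>{..?n}. 0 \<le> c0 j + s * a j \<and> c0 j + s * a j \<le> 1)" for s
  have "(\<Sum>k\<le>?n. c0 k *\<^sub>R x k) = y + t0"
    using coord_sum[OF basis_list_omit_list[of ?n], of "y + t0"]
    by (simp add: lessThan_Suc_atMost[symmetric] c0_def nth_omit_list_last)
  moreover have "(\<Sum>k\<le>?n. (c0 k + s * a k) *\<^sub>R x k) =
      (\<Sum>k\<le>?n. c0 k *\<^sub>R x k) + s *\<^sub>R (\<Sum>k\<le>?n. a k *\<^sub>R x k)" for s
    by (simp add: scaleR_add_left sum.distrib scaleR_sum_right)
  ultimately have line: "(\<Sum>k\<le>?n. (c0 k + s * a k) *\<^sub>R x k) = y + t0" for s
    using rel by simp
  have s0m: "c0 m + s0 m * a m = 0" and s1m: "c0 m + s1 m * a m = 1" if "m \<le> ?n" for m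
    using a0[OF that] by (simp_all add: s0_def s1_def)
  have at_s0: "(\<Sum>k\<le>?n. (c0 k + s0 m * a k) *\<^sub>R x k) = y + t0 + (c0 m + s0 m * a m) *\<^sub>R x m"
    if "m \<le> ?n" for m
    using line[of "s0 m"] s0m[OF that] by simp
  have at_s1: "(\<Sum>k\<le>?n. (c0 k + s1 m * a k) *\<^sub>R x k) = (y - x m) + t0 + (c0 m + s1 m * a m) *\<^sub>R x m"
    if "m \<le> ?n" for m
    using line[of "s1 m"] s1m[OF that] by simp
  have yx: "y - x m \<in> dual_lattice G" if "m \<le> ?n" for m
    using dual_lattice_diff[OF y xL[OF that]] .
  have box: "(\<Sum>k\<in>{..?n}. sgn (a k) * ((if In (s0 k) then 1 else 0) - (if In (s1 k) then 1 else 0))) = 0"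
    unfolding s0_def s1_def In_def
  proof (rule sum_sgn_box_crossings_eq_0)
    fix k j assume "k \<in> {..?n}" "j \<in> {..?n}" "j \<noteq> k"
    then show "c0 j + - c0 k / a k * a j \<notin> \<int>" "c0 j + (1 - c0 k) / a k * a j \<notin> \<int>"
      using coeff_not_Ints[OF _ y at_s0] coeff_not_Ints[OF _ yx at_s1] by (simp_all add: s0_def s1_def)
  qed (use a0 in auto)
  have mem: "y \<in> cube_points (dual_lattice G) (omit_list x m) t0 \<longleftrightarrow> In (s0 m)"
    "y - x m \<in> cube_points (dual_lattice G) (omit_list x m) t0 \<longleftrightarrow> In (s1 m)" if "m \<le> ?n" for m
    using mem_cube_points_omit_list_iff[OF that y at_s0[OF that]]
      mem_cube_points_omit_list_iff[OF that yx[OF that] at_s1[OF that]] s0m[OF that] s1m[OF that]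
    by (simp_all add: In_def Ball_def)
  have "(\<Sum>m\<le>?n. sgn (a m) * ((if y \<in> cube_points (dual_lattice G) (omit_list x m) t0 then 1 else 0)
      - (if y - x m \<in> cube_points (dual_lattice G) (omit_list x m) t0 then 1 else 0))) =
      (\<Sum>k\<in>{..?n}. sgn (a k) * ((if In (s0 k) then 1 else 0) - (if In (s1 k) then 1 else 0)))"
    by (rule sum.cong) (simp_all add: mem)
  then show ?thesis
    using box by simp
qed

lemma sum_sgn_cube_points_translate_eq_0:
  fixes g :: "real^'n \<Rightarrow> 'b::real_vector"
  shows "(\<Sum>m\<le>CARD('n). sgn (a m) *\<^sub>R ((\<Sum>y\<in>cube_points (dual_lattice G) (omit_list x m) t0. g y)
      - (\<Sum>y\<in>cube_points (dual_lattice G) (omit_list x m) t0. g (y + x m)))) = 0"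
  by (rule sum_translate_differences_eq_0)
    (simp_all add: finite_cube_points[OF G] sum_sgn_cube_points_indicator_eq_0)

text \<open>Taking \<open>g = id\<close> turns the cell volumes into a linear relation among the \<open>x\<^sub>m\<close>, which must
  be proportional to \<open>a\<close>.\<close>

lemma card_cube_points_omit_list:
  assumes m: "m \<le> CARD('n)"
  shows "real (card (cube_points (dual_lattice G) (omit_list x m) t0)) =
    real (card (cube_points (dual_lattice G) (omit_list x (CARD('n))) t0)) * \<bar>a m\<bar> / \<bar>a (CARD('n))\<bar>"
proof -
  let ?n = "CARD('n)"
  define V where "V m = real (card (cube_points (dual_lattice G) (omit_list x m) t0))" for m
  have "(\<Sum>y\<in>cube_points (dual_lattice G) (omit_list x k) t0. y) -
      (\<Sum>y\<in>cube_points (dual_lattice G) (omit_list x k) t0. y + x k) = - V k *\<^sub>R x k" for k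
    by (simp add: sum.distrib V_def scaleR_conv_of_real)
  then have "(\<Sum>k\<le>?n. (- (sgn (a k) * V k)) *\<^sub>R x k) = 0"
    using sum_sgn_cube_points_translate_eq_0[of "\<lambda>y. y"] by simp
  then have "- (sgn (a m) * V m) = (- (sgn (a ?n) * V ?n) / a ?n) * a m"
    by (rule omit_list_relation_unique[OF basis_list_omit_list[OF order_refl] rel a0[OF order_refl] _ m])
  moreover have "\<bar>a k\<bar> = sgn (a k) * a k" "sgn (a k) * sgn (a k) = 1" if "k \<le> ?n" for k
    using a0[OF that] by (simp_all add: abs_sgn sgn_mult_self_eq sgn_if)
  ultimately have "V m = V ?n * \<bar>a m\<bar> / \<bar>a ?n\<bar>"
    using a0[OF m] a0[of ?n] m by (auto simp: field_simps sgn_if split: if_splits)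
  then show ?thesis
    unfolding V_def .
qed

lemma alternating_det_div_card_omit_list:
  assumes m: "m \<le> CARD('n)"
  defines "V \<equiv> \<lambda>m. real (card (cube_points (dual_lattice G) (omit_list x m) t0))"
  shows "(-1) ^ m * (list_det (omit_list x m) / V m) =
    list_det (omit_list x 0) / a 0 * \<bar>a (CARD('n))\<bar> / V (CARD('n)) * sgn (a m)"
proof -
  let ?n = "CARD('n)"
  have "V ?n > 0"
    using card_cube_points_pos[OF G] bases[of ?n] by (auto simp: V_def arr_basis_def)
  have "(-1) ^ m * (list_det (omit_list x m) / V m) = ((-1) ^ m * list_det (omit_list x m)) / V m"
    by simp
  also have "\<dots> = (list_det (omit_list x 0) / a 0 * a m) / (V ?n * \<bar>a m\<bar> / \<bar>a ?n\<bar>)"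
    using list_det_omit_list[OF rel a0 m] card_cube_points_omit_list[OF m] by (simp add: V_def)
  also have "\<dots> = list_det (omit_list x 0) / a 0 * \<bar>a ?n\<bar> / V ?n * (a m / \<bar>a m\<bar>)"
    using \<open>V ?n > 0\<close> a0[OF m] a0[of ?n] by (simp add: field_simps)
  also have "a m / \<bar>a m\<bar> = sgn (a m)"
    using a0[OF m] by (simp add: sgn_if)
  finally show ?thesis .
qed

lemma sum_alternating_mu_coef_omit_list:
  assumes E: "\<And>k. k \<le> CARD('n) \<Longrightarrow> exp (cpair (x k) z) \<noteq> 1"
  shows "(\<Sum>m\<le>CARD('n). (-1) ^ m * mu_coef (dual_lattice G) (omit_list x m) t0 z) = 0"
proof -
  let ?n = "CARD('n)"
  let ?A = "\<lambda>m. cube_points (dual_lattice G) (omit_list x m) t0"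
  define V where "V m = real (card (?A m))" for m
  define N where "N m = (\<Sum>y\<in>?A m. exp (cpair y z))" for m
  define e where "e m = exp (cpair (x m) z)" for m
  define P where "P = (\<Prod>k\<le>?n. 1 / (1 - e k))"
  define c where "c = list_det (omit_list x 0) / a 0 * \<bar>a ?n\<bar> / V ?n"
  have sign: "(-1) ^ m * (list_det (omit_list x m) / V m) = c * sgn (a m)" if "m \<le> ?n" for m
    unfolding V_def c_def by (rule alternating_det_div_card_omit_list[OF that])
  have prod: "(\<Prod>j<?n. 1 / (1 - exp (cpair (omit_list x m ! j) z))) = P * (1 - e m)" if m: "m \<le> ?n" for m
    using prod_skip[OF m, of "\<lambda>k. 1 / (1 - e k)"] prod.remove[of "{..?n}" m "\<lambda>k. 1 / (1 - e k)"] m E[OF m]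
    by (simp add: P_def e_def nth_omit_list)
  have "(-1) ^ m * mu_coef (dual_lattice G) (omit_list x m) t0 z =
      complex_of_real c * P * (sgn (a m) *\<^sub>R ((1 - e m) * N m))" if m: "m \<le> ?n" for m
  proof -
    have "lattice_index (dual_lattice G) (omit_list x m) = card (?A m)"
      using lattice_index_eq_card_cube_points[of "omit_list x m" G t0] bases[OF m] by (simp add: arr_basis_def)
    then have "mu_coef (dual_lattice G) (omit_list x m) t0 z =
        complex_of_real (list_det (omit_list x m) / V m) * (P * (1 - e m)) * N m"
      unfolding mu_coef_def cube_points_def[symmetric] by (simp add: V_def N_def prod[OF m])
    then have "(-1) ^ m * mu_coef (dual_lattice G) (omit_list x m) t0 z =
        complex_of_real ((-1) ^ m * (list_det (omit_list x m) / V m)) * P * ((1 - e m) * N m)"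
      by simp
    then show ?thesis
      unfolding sign[OF m] by (simp add: scaleR_conv_of_real)
  qed
  then have "(\<Sum>m\<le>?n. (-1) ^ m * mu_coef (dual_lattice G) (omit_list x m) t0 z) =
      complex_of_real c * P * (\<Sum>m\<le>?n. sgn (a m) *\<^sub>R ((1 - e m) * N m))"
    by (simp add: sum_distrib_left)
  also have "(\<Sum>m\<le>?n. sgn (a m) *\<^sub>R ((1 - e m) * N m)) = 0"
  proof -
    have "(1 - e m) * N m = (\<Sum>y\<in>?A m. exp (cpair y z)) - (\<Sum>y\<in>?A m. exp (cpair (y + x m) z))" for m
      by (simp add: N_def e_def cpair_add exp_add left_diff_distrib right_diff_distrib sum_distrib_left sum_subtractf mult.commute)
    then show ?thesis
      using sum_sgn_cube_points_translate_eq_0[of "\<lambda>y. exp (cpair y z)"] by simp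
  qed
  finally show ?thesis
    by simp
qed

end

lemma omit_list_relation:
  fixes x :: "nat \<Rightarrow> real^'n"
  assumes bases: "\<And>m. m \<le> CARD('n) \<Longrightarrow> basis_list (omit_list x m)"
  obtains a where "(\<Sum>k\<le>CARD('n). a k *\<^sub>R x k) = 0" and "\<And>k. k \<le> CARD('n) \<Longrightarrow> a k \<noteq> 0"
proof
  let ?n = "CARD('n)"
  let ?b = "omit_list x ?n"
  define a where "a k = (if k < ?n then coord ?b (x ?n) k else -1)" for k
  show rel: "(\<Sum>k\<le>?n. a k *\<^sub>R x k) = 0"
    using coord_sum[OF bases[of ?n], of "x ?n"]
    by (simp add: lessThan_Suc_atMost[symmetric] a_def nth_omit_list_last)
  show "a k \<noteq> 0" if k: "k \<le> ?n" for k
  proof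
    assume ak: "a k = 0"
    then have kn: "k < ?n"
      using k by (cases "k = ?n") (simp_all add: a_def)
    have "(\<Sum>j<?n. a (skip k j) *\<^sub>R omit_list x k ! j) = (\<Sum>k'\<in>{..?n} - {k}. a k' *\<^sub>R x k')"
      using sum_skip[OF k, of "\<lambda>k'. a k' *\<^sub>R x k'"] by (simp add: nth_omit_list)
    also have "\<dots> = 0"
      using rel ak k by (simp add: sum_diff1)
    finally have "a (skip k (?n - 1)) = 0"
      using basis_list_lincomb_eq_0[OF bases[OF k], of "\<lambda>j. a (skip k j)" "?n - 1"] by simp
    moreover have "skip k (?n - 1) = ?n"
      using kn by (simp add: skip_def)
    ultimately show False
      by (simp add: a_def)
  qed
qed

section \<open>Circuits\<close>

lemma nth_take_drop_Suc:
  assumes "m < length C" and "j < length C - 1"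
  shows "(take m C @ drop (Suc m) C) ! j = C ! skip m j"
  using assms by (auto simp: nth_append skip_def min_def add.commute)

lemma defines_hyp_parallel:
  assumes u: "defines_hyp u H" and v: "defines_hyp v H"
  shows "\<exists>r. r \<noteq> 0 \<and> u = r *\<^sub>R (v :: real^'n)"
proof -
  have v0: "v \<noteq> 0" and u0: "u \<noteq> 0" and H: "H = {w. u \<bullet> w = 0}" "H = {w. v \<bullet> w = 0}"
    using u v by (auto simp: defines_hyp_def)
  define r where "r = (u \<bullet> v) / (v \<bullet> v)"
  define w where "w = u - r *\<^sub>R v"
  have "v \<bullet> w = 0"
    unfolding w_def r_def using v0 by (simp add: inner_diff_right inner_commute)
  then have "w \<in> H"
    using H(2) by (simp add: inner_commute)
  then have "u \<bullet> w = 0"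
    using H(1) by simp
  then have "w \<bullet> w = 0"
    using \<open>v \<bullet> w = 0\<close> by (simp add: w_def inner_diff_left)
  then have "u = r *\<^sub>R v"
    unfolding w_def by simp
  then show ?thesis
    using u0 by auto
qed

lemma bij_betw_nth_skip:
  assumes C: "distinct C" "length C = Suc n" and m: "m \<le> n"
  shows "bij_betw (\<lambda>j. C ! skip m j) {..<n} (set C - {C ! m})"
proof (rule bij_betw_imageI)
  have lt: "skip m j < length C" if "j < n" for j
    using skip_le[OF m that] C(2) by simp
  show "inj_on (\<lambda>j. C ! skip m j) {..<n}"
  proof (rule inj_onI)
    fix j j' assume j: "j \<in> {..<n}" "j' \<in> {..<n}" and eq: "C ! skip m j = C ! skip m j'"
    then have "skip m j = skip m j'"
      using nth_eq_iff_index_eq[OF C(1) lt lt] by simp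
    then show "j = j'"
      by (simp add: skip_def split: if_splits)
  qed
  show "(\<lambda>j. C ! skip m j) ` {..<n} = set C - {C ! m}"
  proof
    show "(\<lambda>j. C ! skip m j) ` {..<n} \<subseteq> set C - {C ! m}"
    proof
      fix H assume "H \<in> (\<lambda>j. C ! skip m j) ` {..<n}"
      then obtain j where j: "j < n" and H: "H = C ! skip m j"
        by blast
      have "m < length C"
        using m C(2) by simp
      then have "C ! skip m j \<noteq> C ! m"
        using nth_eq_iff_index_eq[OF C(1) lt[OF j]] skip_neq[of m j] by simp
      moreover have "C ! skip m j \<in> set C"
        using lt[OF j] by simp
      ultimately show "H \<in> set C - {C ! m}"
        using H by simp
    qed
    show "set C - {C ! m} \<subseteq> (\<lambda>j. C ! skip m j) ` {..<n}"
    proof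
      fix H assume H: "H \<in> set C - {C ! m}"
      then obtain k where k: "k < length C" "C ! k = H"
        by (auto simp: in_set_conv_nth)
      then have "k \<le> n" "k \<noteq> m"
        using H C(2) by auto
      then obtain j where "j < n" "skip m j = k"
        using skip_surj[OF m] by blast
      then show "H \<in> (\<lambda>j. C ! skip m j) ` {..<n}"
        using k by blast
    qed
  qed
qed

text \<open>Dropping one hyperplane from a circuit leaves an independent set, so any choice of
  defining forms for the remaining ones is a basis.\<close>

lemma arr_basis_circuit_omit:
  fixes C :: "(real^'n) set list" and S :: "(real^'n) list"
  assumes C: "distinct C" "length C = CARD('n) + 1" "is_circuit A (set C)" and m: "m \<le> CARD('n)"
    and len: "length S = CARD('n)"
    and S: "\<And>j. j < CARD('n) \<Longrightarrow> S!j \<in> L \<and> defines_hyp (S!j) (C ! skip m j)"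
  shows "arr_basis L A S"
proof -
  let ?n = "CARD('n)"
  let ?H = "\<lambda>j. C ! skip m j"
  have bij: "bij_betw ?H {..<?n} (set C - {C ! m})"
    using bij_betw_nth_skip[of C ?n m] C m by simp
  then have img: "?H ` {..<?n} = set C - {C ! m}"
    by (simp add: bij_betw_def)
  have "C ! m \<in> set C"
    using C(2) m by simp
  then have "hyp_indep (?H ` {..<?n})"
    unfolding img using C(3) by (simp add: is_circuit_def)
  then obtain f where f: "\<forall>H\<in>?H ` {..<?n}. defines_hyp (f H) H"
    "inj_on f (?H ` {..<?n})" "independent (f ` ?H ` {..<?n})"
    unfolding hyp_indep_def by blast
  define F where "F = map (\<lambda>j. f (?H j)) [0..<?n]"
  have "inj_on (\<lambda>j. f (?H j)) {..<?n}"
    using comp_inj_on[OF bij_betw_imp_inj_on[OF bij] f(2)] by (simp add: comp_def)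
  then have "distinct F"
    by (simp add: F_def distinct_map atLeast0LessThan)
  moreover have "set F = f ` ?H ` {..<?n}"
    by (auto simp: F_def)
  ultimately have "basis_list F"
    using f(3) by (simp add: basis_list_def F_def)
  moreover have "\<exists>c. c \<noteq> 0 \<and> S!j = c *\<^sub>R F!j" if "j < ?n" for j
    using defines_hyp_parallel[of "S!j" "?H j" "F!j"] S[OF that] f(1) that by (simp add: F_def)
  ultimately have "basis_list S"
    by (rule basis_list_rescale[OF _ len])
  moreover have "S!j \<in> L \<and> {w. S!j \<bullet> w = 0} \<in> A" if "j < ?n" for j
  proof -
    have "?H j \<in> set C"
      using img that by blast
    then show ?thesis
      using S[OF that] C(3) by (auto simp: defines_hyp_def is_circuit_def)
  qed
  then have "set S \<subseteq> L" "\<forall>v\<in>set S. {w. v \<bullet> w = 0} \<in> A"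
    using len by (auto simp: in_set_conv_nth)
  ultimately show ?thesis
    by (simp add: arr_basis_def)
qed

lemma sum_alternating_mu_coef_circuit:
  fixes G :: "(real^'n) set" and C :: "(real^'n) set list"
    and S :: "nat \<Rightarrow> (real^'n) list" and t :: "nat \<Rightarrow> real^'n"
  assumes G: "full_lattice G" and D: "D \<in> components (chamber_set (dual_lattice G) A)"
    and C: "distinct C" "length C = CARD('n) + 1" "is_circuit A (set C)"
    and len: "\<And>m. m \<le> CARD('n) \<Longrightarrow> length (S m) = CARD('n)"
    and S: "\<And>m j. m \<le> CARD('n) \<Longrightarrow> j < CARD('n) \<Longrightarrow>
      S m ! j \<in> dual_lattice G \<and> defines_hyp (S m ! j) (C ! skip m j) \<and> exp (cpair (S m ! j) z) \<noteq> 1"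
    and t: "\<And>m. m \<le> CARD('n) \<Longrightarrow> t m \<in> D"
  shows "(\<Sum>m\<le>CARD('n). (-1) ^ m * mu_coef (dual_lattice G) (S m) (t m) z) = 0"
proof -
  let ?n = "CARD('n)"
  let ?L = "dual_lattice G"
  \<comment> \<open>\<open>S 0\<close> supplies forms for every hyperplane except \<open>C ! 0\<close>, whose form is taken from \<open>S 1\<close>.\<close>
  define x where "x k = (if k = 0 then S 1 ! 0 else S 0 ! (k - 1))" for k
  have x: "x k \<in> ?L \<and> defines_hyp (x k) (C ! k) \<and> exp (cpair (x k) z) \<noteq> 1" if "k \<le> ?n" for k
    using S[of 1 0] S[of 0 "k - 1"] that by (cases "k = 0") (auto simp: x_def skip_def)
  have bases: "arr_basis ?L A (omit_list x m)" "arr_basis ?L A (S m)" if m: "m \<le> ?n" for m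
    using arr_basis_circuit_omit[OF C m] S[OF m] x skip_le[OF m] len[OF m]
    by (auto simp: nth_omit_list)
  have "mu_coef ?L (S m) (t m) z = mu_coef ?L (omit_list x m) (t 0) z" if m: "m \<le> ?n" for m
  proof (rule mu_coef_well_defined[OF G bases[OF m] D t[OF le0] t[OF m]])
    fix k assume k: "k < ?n"
    then show "\<exists>r. r \<noteq> 0 \<and> S m ! k = r *\<^sub>R omit_list x m ! k"
      using defines_hyp_parallel[of "S m ! k" "C ! skip m k" "x (skip m k)"] S[OF m k]
        x[OF skip_le[OF m k]] by (simp add: nth_omit_list)
    show "exp (cpair (omit_list x m ! k) z) \<noteq> 1" "exp (cpair (S m ! k) z) \<noteq> 1"
      using S[OF m k] x[OF skip_le[OF m k]] k by (simp_all add: nth_omit_list)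
  qed
  moreover obtain a where "(\<Sum>k\<le>?n. a k *\<^sub>R x k) = 0" "\<And>k. k \<le> ?n \<Longrightarrow> a k \<noteq> 0"
    using omit_list_relation[of x] bases(1) by (auto simp: arr_basis_def)
  moreover have "t 0 \<in> chamber_set ?L A"
    using in_components_subset[OF D] t[OF le0] by blast
  ultimately show ?thesis
    using sum_alternating_mu_coef_omit_list[OF G bases(1) _ _ _ _ _, of "t 0" a z] x by simp
qed

theorem mainTheorem6:
  fixes \<Gamma> :: "(real^'n) set" and \<A> :: "(real^'n) set set" and \<Delta> :: "(real^'n) set"
    and C :: "(real^'n) set list"
    and X :: "nat \<Rightarrow> (real^'n) list" and T :: "nat \<Rightarrow> real^'n"
  defines "\<Lambda> \<equiv> dual_lattice \<Gamma>"
  assumes lat: "full_lattice \<Gamma>"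
    and finA: "finite \<A>"
    and hypA: "\<forall>H\<in>\<A>. \<exists>x\<in>\<Lambda>. defines_hyp x H"
    and essA: "\<Inter>\<A> = {0}"
    and cham: "\<Delta> \<in> components (chamber_set \<Lambda> \<A>)"
    and Cdist: "distinct C" and Clen: "length C = CARD('n) + 1"
    and Ccirc: "is_circuit \<A> (set C)"
    and Xlen: "\<forall>i\<in>{1..CARD('n)+1}. length (X i) = CARD('n)"
    and Xdef: "\<forall>i\<in>{1..CARD('n)+1}. \<forall>j<CARD('n).
                 X i ! j \<in> \<Lambda> \<and> defines_hyp (X i ! j) ((take (i - 1) C @ drop i C) ! j)"
    and Tin: "\<forall>i\<in>{1..CARD('n)+1}. T i \<in> \<Delta>"
  shows "\<forall>z :: complex^'n.
           (\<forall>i\<in>{1..CARD('n)+1}. \<forall>j<CARD('n). exp (cpair (X i ! j) z) \<noteq> 1) \<longrightarrow>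
           (\<Sum>i=1..CARD('n)+1. (-1) ^ i * mu_coef \<Lambda> (X i) (T i) z) = 0"
proof (intro allI impI)
  fix z :: "complex^'n"
  assume Hz: "\<forall>i\<in>{1..CARD('n)+1}. \<forall>j<CARD('n). exp (cpair (X i ! j) z) \<noteq> 1"
  let ?n = "CARD('n)"
  have "(\<Sum>m\<le>?n. (-1) ^ m * mu_coef \<Lambda> (X (Suc m)) (T (Suc m)) z) = 0"
    unfolding \<Lambda>_def
  proof (rule sum_alternating_mu_coef_circuit[OF lat cham[unfolded \<Lambda>_def] Cdist Clen Ccirc])
    fix m j assume m: "m \<le> ?n" and j: "j < ?n"
    then have "Suc m \<in> {1..?n+1}"
      by simp
    then show "X (Suc m) ! j \<in> dual_lattice \<Gamma> \<and> defines_hyp (X (Suc m) ! j) (C ! skip m j) \<and>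
        exp (cpair (X (Suc m) ! j) z) \<noteq> 1"
      using Xdef Hz nth_take_drop_Suc[of m C j] Clen m j unfolding \<Lambda>_def by fastforce
  qed (use Xlen Tin in auto)
  then show "(\<Sum>i=1..?n+1. (-1) ^ i * mu_coef \<Lambda> (X i) (T i) z) = 0"
    using sum.shift_bounds_cl_Suc_ivl[of "\<lambda>i. (-1) ^ i * mu_coef \<Lambda> (X i) (T i) z" 0 ?n]
    by (simp add: atLeast0AtMost sum_negf)
qed

end
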